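(* Let $V$ be a $\mathbb Q$-graded vertex operator algebra. (a) $O(V)$ is a two-sided ideal of $V$ with respect to the product $*$, and $A(V)=V/O(V)$ is an associative algebra with identity $\mathbf 1+O(V)$; moreover $\omega+O(V)$ lies in the center of $A(V)$. (b) For any weak $V$-module $M$, $\Omega(M)$ is an $A(V)$-module on which $a+O(V)$ acts as $o(a)$.
   Context: A $\mathbb Q$-graded vertex operator algebra $V=\oplus_{\alpha\in\mathbb Q}V_\alpha$ satisfies all axioms of a vertex operator algebra (vacuum $\mathbf 1$, conformal vector $\omega$, $L(0)$ acting on $V_\alpha$ by $\alpha$, Jacobi identity, etc.) except that the grading is by $\mathbb Q$ instead of $\mathbb Z$; ${\rm wt}\,a=\alpha$ for $a\in V_\alpha$. A weak $V$-module is a vector space $M$ with $Y_M:V\to({\rm End}M)[[z,z^{-1}]]$, $Y_M(a,z)=\sum a_nz^{-n-1}$, such that $Y_M(\mathbf 1,z)={\rm id}$, $Y_M(a,z)u\in M((z))$, $Y_M(L(-1)a,z)=\frac{d}{dz}Y_M(a,z)$, and the Jacobi identity holds. For homogeneous $a$ let $\varepsilon(a)=1$ if ${\rm wt}\,a\in\mathbb Z$ and $\varepsilon(a)=0$ otherwise, and $[\cdot]$ the greatest-integer function. Define $a*b=\varepsilon(a)\,{\rm Res}_x\frac{(1+x)^{[{\rm wt}a]}}{x}Y(a,x)b$ for homogeneous $a$, extended bilinearly; $O(V)$ is the span of ${\rm Res}_x\frac{(1+x)^{[{\rm wt}a]}}{x^{1+\varepsilon(a)}}Y(a,x)b$ for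 homogeneous $a\in V$, $b\in V$. For a weak module $M$, $\Omega(M)=\{u\in M: a_mu=0$ for all homogeneous $a$ and $m>{\rm wt}\,a-1\}$, and $o(a)=\varepsilon(a)a_{[{\rm wt}a]-1}$ for homogeneous $a$, extended linearly. *)

theory Defs
  imports Complex_Main
begin

class cvector = ab_group_add +
  fixes scaleC :: "complex \<Rightarrow> 'a \<Rightarrow> 'a" (infixr "*\<^sub>C" 75)
  assumes scaleC_add_right: "c *\<^sub>C (x + y) = c *\<^sub>C x + c *\<^sub>C y"
    and scaleC_add_left: "(c + d) *\<^sub>C x = c *\<^sub>C x + d *\<^sub>C x"
    and scaleC_scaleC: "c *\<^sub>C (d *\<^sub>C x) = (c * d) *\<^sub>C x"
    and scaleC_one: "1 *\<^sub>C x = x"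

text \<open>Vertex operators are encoded by their modes: Y a b n = a_n b, i.e.
  Y(a,z) b = sum over n of (Y a b n) z^(-n-1).  Vector spaces are over the complex numbers.\<close>

definition is_clin :: "('a::cvector \<Rightarrow> 'b::cvector) \<Rightarrow> bool" where
  "is_clin f \<longleftrightarrow> (\<forall>x y. f (x + y) = f x + f y) \<and> (\<forall>c x. f (c *\<^sub>C x) = c *\<^sub>C f x)"

definition cspan :: "'a::cvector set \<Rightarrow> 'a set" where
  "cspan S = {x. \<exists>T c. finite T \<and> T \<subseteq> S \<and> x = (\<Sum>s\<in>T. c s *\<^sub>C s)}"

text \<open>Sum of a sequence with only finitely many nonzero terms (all sums below are of this kind
  by the truncation axiom).\<close>
definition fsum :: "(nat \<Rightarrow> 'a::comm_monoid_add) \<Rightarrow> 'a" where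
  "fsum f = sum f {i. f i \<noteq> 0}"

text \<open>Truncation: Y(a,z)w has only finitely many negative powers of z.\<close>
definition truncation :: "('v \<Rightarrow> 'm \<Rightarrow> int \<Rightarrow> 'm::zero) \<Rightarrow> bool" where
  "truncation YM \<longleftrightarrow> (\<forall>a w. \<exists>N. \<forall>n\<ge>N. YM a w n = 0)"

text \<open>Jacobi identity, written out coefficientwise (Borcherds identity):
  sum_i binom(m,i) (a_{l+i} b)_{m+n-i} w
   = sum_i (-1)^i binom(l,i) (a_{m+l-i} b_{n+i} w - (-1)^l b_{n+l-i} a_{m+i} w).\<close>
definition jacobi :: "('v \<Rightarrow> 'v \<Rightarrow> int \<Rightarrow> 'v) \<Rightarrow> ('v \<Rightarrow> 'm \<Rightarrow> int \<Rightarrow> 'm::cvector) \<Rightarrow> bool" where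
  "jacobi Y YM \<longleftrightarrow> (\<forall>a b w m n l.
     fsum (\<lambda>i. ((of_int m :: complex) gchoose i) *\<^sub>C YM (Y a b (l + int i)) w (m + n - int i)) =
     fsum (\<lambda>i. ((-1) ^ i * ((of_int l :: complex) gchoose i)) *\<^sub>C YM a (YM b w (n + int i)) (m + l - int i))
     - fsum (\<lambda>i. ((-1) ^ i * (if even l then 1 else -1) * ((of_int l :: complex) gchoose i))
                  *\<^sub>C YM b (YM a w (m + int i)) (n + l - int i)))"

text \<open>Homogeneous subspace V_alpha: L(0) = omega_1 acts by alpha.\<close>
definition Vg :: "('v \<Rightarrow> 'v \<Rightarrow> int \<Rightarrow> 'v::cvector) \<Rightarrow> 'v \<Rightarrow> rat \<Rightarrow> 'v set" where
  "Vg Y \<omega> \<alpha> = {v. Y \<omega> v 1 = of_rat \<alpha> *\<^sub>C v}"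

definition qVOA :: "('v::cvector \<Rightarrow> 'v \<Rightarrow> int \<Rightarrow> 'v) \<Rightarrow> 'v \<Rightarrow> 'v \<Rightarrow> complex \<Rightarrow> bool" where
  "qVOA Y vac \<omega> cc \<longleftrightarrow>
     (\<forall>b n. is_clin (\<lambda>a. Y a b n)) \<and> (\<forall>a n. is_clin (\<lambda>b. Y a b n))
   \<and> (\<forall>v. \<exists>S f. finite S \<and> (\<forall>\<alpha>\<in>S. f \<alpha> \<in> Vg Y \<omega> \<alpha>) \<and> v = sum f S)
   \<and> (\<forall>\<alpha>. \<exists>B. finite B \<and> Vg Y \<omega> \<alpha> \<subseteq> cspan B)
   \<and> (\<exists>N. \<forall>\<alpha><N. Vg Y \<omega> \<alpha> = {0})
   \<and> truncation Y
   \<and> (\<forall>b n. Y vac b n = (if n = -1 then b else 0))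
   \<and> (\<forall>a n. n \<ge> 0 \<longrightarrow> Y a vac n = 0) \<and> (\<forall>a. Y a vac (-1) = a)
   \<and> jacobi Y Y
   \<and> (\<forall>m n v. Y \<omega> (Y \<omega> v (n + 1)) (m + 1) - Y \<omega> (Y \<omega> v (m + 1)) (n + 1)
              = of_int (m - n) *\<^sub>C Y \<omega> v (m + n + 1)
                + (if m + n = 0 then (of_int (m ^ 3 - m) / 12 * cc) *\<^sub>C v else 0))
   \<and> \<omega> \<in> Vg Y \<omega> 2
   \<and> (\<forall>a b n. Y (Y \<omega> a 0) b n = - (of_int n *\<^sub>C Y a b (n - 1)))"

definition hcomp :: "('v \<Rightarrow> 'v \<Rightarrow> int \<Rightarrow> 'v::cvector) \<Rightarrow> 'v \<Rightarrow> rat \<Rightarrow> 'v \<Rightarrow> 'v" where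
  "hcomp Y \<omega> \<alpha> v = (THE w. \<exists>S f. finite S \<and> (\<forall>\<beta>\<in>S. f \<beta> \<in> Vg Y \<omega> \<beta>) \<and> v = sum f S
                              \<and> w = (if \<alpha> \<in> S then f \<alpha> else 0))"

definition starh :: "('v \<Rightarrow> 'v \<Rightarrow> int \<Rightarrow> 'v::cvector) \<Rightarrow> rat \<Rightarrow> 'v \<Rightarrow> 'v \<Rightarrow> 'v" where
  "starh Y \<alpha> a b = (if \<alpha> \<in> \<int> then fsum (\<lambda>i. ((of_int \<lfloor>\<alpha>\<rfloor> :: complex) gchoose i) *\<^sub>C Y a b (int i - 1)) else 0)"

definition star :: "('v \<Rightarrow> 'v \<Rightarrow> int \<Rightarrow> 'v::cvector) \<Rightarrow> 'v \<Rightarrow> 'v \<Rightarrow> 'v \<Rightarrow> 'v" where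
  "star Y \<omega> a b = (\<Sum>\<alpha>\<in>{\<alpha>. hcomp Y \<omega> \<alpha> a \<noteq> 0}. starh Y \<alpha> (hcomp Y \<omega> \<alpha> a) b)"

text \<open>Res_x (1+x)^[wt a] / x^(1+eps(a)) Y(a,x) b for a homogeneous of weight alpha.\<close>
definition Oh :: "('v \<Rightarrow> 'v \<Rightarrow> int \<Rightarrow> 'v::cvector) \<Rightarrow> rat \<Rightarrow> 'v \<Rightarrow> 'v \<Rightarrow> 'v" where
  "Oh Y \<alpha> a b = fsum (\<lambda>i. ((of_int \<lfloor>\<alpha>\<rfloor> :: complex) gchoose i) *\<^sub>C
                        Y a b (int i - 1 - (if \<alpha> \<in> \<int> then 1 else 0)))"

definition OV :: "('v \<Rightarrow> 'v \<Rightarrow> int \<Rightarrow> 'v::cvector) \<Rightarrow> 'v \<Rightarrow> 'v set" where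
  "OV Y \<omega> = cspan {Oh Y \<alpha> a b | \<alpha> a b. a \<in> Vg Y \<omega> \<alpha>}"

definition weak_module :: "('v::cvector \<Rightarrow> 'v \<Rightarrow> int \<Rightarrow> 'v) \<Rightarrow> 'v \<Rightarrow> 'v
     \<Rightarrow> ('v \<Rightarrow> 'm::cvector \<Rightarrow> int \<Rightarrow> 'm) \<Rightarrow> bool" where
  "weak_module Y vac \<omega> YM \<longleftrightarrow>
     (\<forall>w n. is_clin (\<lambda>a. YM a w n)) \<and> (\<forall>a n. is_clin (\<lambda>w. YM a w n))
   \<and> truncation YM
   \<and> (\<forall>w n. YM vac w n = (if n = -1 then w else 0))
   \<and> (\<forall>a w n. YM (Y \<omega> a 0) w n = - (of_int n *\<^sub>C YM a w (n - 1)))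
   \<and> jacobi Y YM"

definition Omega :: "('v \<Rightarrow> 'v \<Rightarrow> int \<Rightarrow> 'v::cvector) \<Rightarrow> 'v \<Rightarrow> ('v \<Rightarrow> 'm \<Rightarrow> int \<Rightarrow> 'm::zero) \<Rightarrow> 'm set" where
  "Omega Y \<omega> YM = {u. \<forall>\<alpha> a m. a \<in> Vg Y \<omega> \<alpha> \<and> of_int m > \<alpha> - 1 \<longrightarrow> YM a u m = 0}"

definition oh :: "('v \<Rightarrow> 'm \<Rightarrow> int \<Rightarrow> 'm::zero) \<Rightarrow> rat \<Rightarrow> 'v \<Rightarrow> 'm \<Rightarrow> 'm" where
  "oh YM \<alpha> a u = (if \<alpha> \<in> \<int> then YM a u (\<lfloor>\<alpha>\<rfloor> - 1) else 0)"

definition oop :: "('v \<Rightarrow> 'v \<Rightarrow> int \<Rightarrow> 'v::cvector) \<Rightarrow> 'v \<Rightarrow> ('v \<Rightarrow> 'm \<Rightarrow> int \<Rightarrow> 'm::comm_monoid_add)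
     \<Rightarrow> 'v \<Rightarrow> 'm \<Rightarrow> 'm" where
  "oop Y \<omega> YM a u = (\<Sum>\<alpha>\<in>{\<alpha>. hcomp Y \<omega> \<alpha> a \<noteq> 0}. oh YM \<alpha> (hcomp Y \<omega> \<alpha> a) u)"

end

theory Submission
  imports Defs "HOL-Computational_Algebra.Formal_Power_Series"
begin

text \<open>
  Let \<open>Res(s, q; a) b = Res\<^sub>x x\<^sup>q (1 + x)\<^sup>s Y(a, x) b\<close>, so that \<open>O(V)\<close> is spanned by the
  \<open>Res([wt a], -1 - \<epsilon>(a); a) b\<close>.  Since \<open>Y(L(-1)a, x)\<close> is the derivative of \<open>Y(a, x)\<close>, these
  generators stay in \<open>O(V)\<close> when the power of \<open>x\<close> is lowered, and also when the power of
  \<open>1 + x\<close> is raised by no more than that.  Multiplying the Borcherds identity by binomial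
  coefficients and resumming expresses \<open>a * Res(s, q; b) c\<close>, \<open>Res(s, q; b) c * a\<close> and
  \<open>a * (b * c)\<close> through residues of the fields \<open>Y(a\<^sub>n b, x)\<close>; every unwanted term has a low
  power of \<open>x\<close> and hence lies in \<open>O(V)\<close>.  This gives the ideal property and associativity;
  the commutator formula together with \<open>L(-1)a + L(0)a \<in> O(V)\<close> gives centrality of \<open>\<omega>\<close>.
  On \<open>\<Omega>(M)\<close> the same identities have all unwanted terms equal to zero, because modes above
  the weight threshold annihilate \<open>\<Omega>(M)\<close>.  Vectors of non-integral weight lie in \<open>O(V)\<close>
  and act by zero.
\<close>

global_interpretation cvec: vector_space "scaleC :: complex \<Rightarrow> 'a \<Rightarrow> 'a::cvector"
  by unfold_locales (simp_all add: scaleC_add_right scaleC_add_left scaleC_scaleC scaleC_one)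

lemma cspan_eq_span: "cspan = cvec.span"
  by (auto simp: cspan_def cvec.span_explicit fun_eq_iff)

lemma is_clinD:
  assumes "is_clin f"
  shows "f (x + y) = f x + f y" "f (c *\<^sub>C x) = c *\<^sub>C f x"
  using assms by (auto simp: is_clin_def)

lemma is_clin_0: "is_clin f \<Longrightarrow> f 0 = 0"
  using is_clinD(2)[of f 0 0] by simp

lemma is_clin_diff: "is_clin f \<Longrightarrow> f (x - y) = f x - f y"
  using is_clinD(2)[of f "-1" y] is_clinD(1)[of f x "-y"] by simp

lemma is_clin_sum: "is_clin f \<Longrightarrow> f (\<Sum>i\<in>A. g i) = (\<Sum>i\<in>A. f (g i))"
  by (induct A rule: infinite_finite_induct) (auto simp: is_clin_0 is_clinD)

lemma is_clin_span_induct: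
  assumes "is_clin f" "cvec.subspace T" "\<And>g. g \<in> G \<Longrightarrow> f g \<in> T" "x \<in> cvec.span G"
  shows "f x \<in> T"
  using assms(4)
proof (induct rule: cvec.span_induct_alt)
  case base
  show ?case using assms(1,2) by (simp add: is_clin_0 cvec.subspace_0)
next
  case (step c x y)
  then show ?case
    using assms by (simp add: is_clinD cvec.subspace_add cvec.subspace_scale)
qed

abbreviation fin_supp :: "(nat \<Rightarrow> 'a::zero) \<Rightarrow> bool" where
  "fin_supp f \<equiv> \<forall>\<^sub>F i in sequentially. f i = 0"

lemma finite_nonzero_iff_fin_supp: "finite {i. f i \<noteq> 0} \<longleftrightarrow> fin_supp f"
  by (simp add: eventually_cofinite cofinite_eq_sequentially[symmetric])

lemma fsum_eq_sum:
  assumes "finite S" "\<And>i. i \<notin> S \<Longrightarrow> f i = 0"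
  shows "fsum f = sum f S"
  unfolding fsum_def using assms by (intro sum.mono_neutral_left) auto

lemma fsum_zero [simp]: "fsum (\<lambda>i. 0) = 0"
  by (simp add: fsum_def)

lemma fsum_in_subspace: "cvec.subspace S \<Longrightarrow> (\<And>i. f i \<in> S) \<Longrightarrow> fsum f \<in> S"
  unfolding fsum_def by (rule cvec.subspace_sum)

lemma fsum_add:
  assumes "fin_supp f" "fin_supp g"
  shows "fsum (\<lambda>i. f i + g i) = fsum f + (fsum g :: 'a::comm_monoid_add)"
proof -
  let ?S = "{i. f i \<noteq> 0} \<union> {i. g i \<noteq> 0}"
  have S: "finite ?S" using assms by (simp add: finite_nonzero_iff_fin_supp)
  have "fsum (\<lambda>i. f i + g i) = (\<Sum>i\<in>?S. f i + g i)" by (rule fsum_eq_sum[OF S]) auto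
  moreover have "fsum f = sum f ?S" "fsum g = sum g ?S" by (rule fsum_eq_sum[OF S], auto)+
  ultimately show ?thesis by (simp add: sum.distrib)
qed

lemma fsum_diff:
  assumes "fin_supp f" "fin_supp g"
  shows "fsum (\<lambda>i. f i - g i) = fsum f - (fsum g :: 'a::ab_group_add)"
proof -
  let ?S = "{i. f i \<noteq> 0} \<union> {i. g i \<noteq> 0}"
  have S: "finite ?S" using assms by (simp add: finite_nonzero_iff_fin_supp)
  have "fsum (\<lambda>i. f i - g i) = (\<Sum>i\<in>?S. f i - g i)" by (rule fsum_eq_sum[OF S]) auto
  moreover have "fsum f = sum f ?S" "fsum g = sum g ?S" by (rule fsum_eq_sum[OF S], auto)+
  ultimately show ?thesis by (simp add: sum_subtractf)
qed

lemma fsum_scaleC_eq_diff: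
  assumes "\<And>t. X t = P t - Q t" "fin_supp (\<lambda>t. c t *\<^sub>C P t)" "fin_supp (\<lambda>t. c t *\<^sub>C Q t)"
  shows "fsum (\<lambda>t. c t *\<^sub>C X t) = fsum (\<lambda>t. c t *\<^sub>C P t) - fsum (\<lambda>t. c t *\<^sub>C (Q t :: 'a::cvector))"
  unfolding assms(1) cvec.scale_right_diff_distrib by (rule fsum_diff[OF assms(2,3)])

lemma fsum_linear:
  assumes "is_clin L" "fin_supp f"
  shows "L (fsum f) = fsum (\<lambda>i. L (f i))"
proof -
  let ?S = "{i. f i \<noteq> 0}"
  have S: "finite ?S" using assms by (simp add: finite_nonzero_iff_fin_supp)
  have "fsum (\<lambda>i. L (f i)) = (\<Sum>i\<in>?S. L (f i))" by (rule fsum_eq_sum[OF S]) (auto simp: is_clin_0 assms)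
  moreover have "fsum f = sum f ?S" by (rule fsum_eq_sum[OF S]) auto
  ultimately show ?thesis by (simp add: is_clin_sum assms)
qed

lemma fsum_scaleC:
  assumes "fin_supp f"
  shows "c *\<^sub>C fsum f = fsum (\<lambda>i. c *\<^sub>C f i)"
  by (rule fsum_linear[OF _ assms]) (simp add: is_clin_def scaleC_add_right mult.commute)

lemma fsum_single: "(\<And>i. i \<noteq> k \<Longrightarrow> f i = 0) \<Longrightarrow> fsum f = f k"
  by (subst fsum_eq_sum[of "{k}"]) auto

lemma fsum_shift:
  assumes "\<And>j. j < k \<Longrightarrow> g j = 0" "fin_supp g"
  shows "fsum g = fsum (\<lambda>u. g (k + u) :: 'a::comm_monoid_add)"
proof -
  obtain N where N: "\<And>i. N \<le> i \<Longrightarrow> g i = 0" using assms(2) by (auto simp: eventually_sequentially)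
  have "fsum g = sum g {k..<N + k}"
    by (rule fsum_eq_sum) (auto simp: assms(1) N not_le)
  also have "\<dots> = sum (\<lambda>u. g (k + u)) {..<N}"
    by (rule sum.reindex_bij_witness[where j="\<lambda>j. j - k" and i="\<lambda>u. k + u"]) auto
  also have "\<dots> = fsum (\<lambda>u. g (k + u))"
    by (rule fsum_eq_sum[symmetric]) (auto simp: N)
  finally show ?thesis .
qed

lemma fsum_split_first:
  assumes "fin_supp f"
  shows "fsum f = f 0 + fsum (\<lambda>u. f (Suc u))"
proof -
  obtain N where N: "\<And>i. N \<le> i \<Longrightarrow> f i = 0" using assms by (auto simp: eventually_sequentially)
  have "fsum f = sum f {..<Suc N}" by (rule fsum_eq_sum) (auto simp: N)
  moreover have "fsum (\<lambda>u. f (Suc u)) = sum (\<lambda>u. f (Suc u)) {..<N}"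
    by (rule fsum_eq_sum) (auto simp: N)
  ultimately show ?thesis by (simp only: sum.lessThan_Suc_shift)
qed

lemma finite_support2I:
  assumes "\<forall>\<^sub>F i in sequentially. \<forall>j. h i j = 0" "\<And>i. \<forall>\<^sub>F j in sequentially. h i j = 0"
  shows "finite {(i, j). h i j \<noteq> 0}"
proof -
  obtain I where I: "\<And>i j. I \<le> i \<Longrightarrow> h i j = 0"
    using assms(1) by (auto simp: eventually_sequentially)
  have "\<forall>\<^sub>F j in sequentially. \<forall>i\<in>{..<I}. h i j = 0"
    by (rule eventually_ball_finite) (use assms(2) in auto)
  then obtain J where J: "\<And>i j. i < I \<Longrightarrow> J \<le> j \<Longrightarrow> h i j = 0"
    by (auto simp: eventually_sequentially)
  have "i < I \<and> j < J" if "h i j \<noteq> 0" for i j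
    using I J that by (meson not_le)
  then have "{(i, j). h i j \<noteq> 0} \<subseteq> {..<I} \<times> {..<J}" by auto
  then show ?thesis by (rule finite_subset) simp
qed

lemma finite_support2_swap:
  assumes "finite {(j, i). h i j \<noteq> 0}"
  shows "finite {(i, j). h i j \<noteq> 0}"
proof -
  have "{(i, j). h i j \<noteq> 0} = prod.swap ` {(j, i). h i j \<noteq> 0}" by auto
  then show ?thesis using assms by simp
qed

lemma eventually_zero_row:
  assumes "finite {(i, j). h i j \<noteq> 0}"
  shows "\<forall>\<^sub>F i in sequentially. \<forall>j. h i j = 0"
proof -
  have "finite (fst ` {(i, j). h i j \<noteq> 0})" using assms by simp
  then have "\<forall>\<^sub>F i in sequentially. i \<notin> fst ` {(i, j). h i j \<noteq> 0}"
    by (simp add: eventually_cofinite cofinite_eq_sequentially[symmetric])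
  then show ?thesis by (rule eventually_mono) force
qed

lemma fin_supp_row:
  assumes "finite {(i, j). h i j \<noteq> 0}"
  shows "fin_supp (h i)"
proof -
  have "{j. h i j \<noteq> 0} \<subseteq> snd ` {(i, j). h i j \<noteq> 0}" by force
  then have "finite {j. h i j \<noteq> 0}" by (rule finite_subset) (use assms in simp)
  then show ?thesis by (simp add: finite_nonzero_iff_fin_supp)
qed

lemma fsum_swap:
  assumes "finite {(i, j). h i j \<noteq> 0}"
  shows "fsum (\<lambda>i. fsum (h i)) = fsum (\<lambda>j. fsum (\<lambda>i. h i j :: 'a::comm_monoid_add))"
proof -
  let ?I = "fst ` {(i, j). h i j \<noteq> 0}" and ?J = "snd ` {(i, j). h i j \<noteq> 0}"
  have I: "finite ?I" and J: "finite ?J" using assms by simp_all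
  have row: "fsum (h i) = sum (h i) ?J" for i by (rule fsum_eq_sum[OF J]) force
  have col: "fsum (\<lambda>i. h i j) = (\<Sum>i\<in>?I. h i j)" for j by (rule fsum_eq_sum[OF I]) force
  have "fsum (\<lambda>i. sum (h i) ?J) = (\<Sum>i\<in>?I. sum (h i) ?J)"
    by (rule fsum_eq_sum[OF I]) (force intro: sum.neutral)
  moreover have "fsum (\<lambda>j. \<Sum>i\<in>?I. h i j) = (\<Sum>j\<in>?J. \<Sum>i\<in>?I. h i j)"
    by (rule fsum_eq_sum[OF J]) (force intro: sum.neutral)
  ultimately show ?thesis unfolding row col by (simp add: sum.swap[of _ ?I])
qed

lemma fsum_scaleC_fsum_linear:
  assumes fin: "finite {(t, i). X t i \<noteq> 0}" and lin: "\<And>i. is_clin (L i)"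
  shows "fsum (\<lambda>t. c t *\<^sub>C fsum (\<lambda>i. d i *\<^sub>C L i (X t i)))
       = fsum (\<lambda>i. d i *\<^sub>C L i (fsum (\<lambda>t. c t *\<^sub>C X t i :: 'a::cvector)) :: 'b::cvector)"
proof -
  have row: "fin_supp (\<lambda>i. X t i)" for t by (rule fin_supp_row[OF fin])
  have col: "fin_supp (\<lambda>t. X t i)" for i
    using eventually_zero_row[OF fin] by (rule eventually_mono) simp
  have row_lin: "fin_supp (\<lambda>i. d i *\<^sub>C L i (X t i))" for t
    using row[of t] by (rule eventually_mono) (simp add: is_clin_0 lin)
  have "fsum (\<lambda>t. c t *\<^sub>C fsum (\<lambda>i. d i *\<^sub>C L i (X t i)))
      = fsum (\<lambda>t. fsum (\<lambda>i. c t *\<^sub>C (d i *\<^sub>C L i (X t i))))"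
    by (simp add: fsum_scaleC[OF row_lin])
  also have "\<dots> = fsum (\<lambda>i. fsum (\<lambda>t. c t *\<^sub>C (d i *\<^sub>C L i (X t i))))"
    by (rule fsum_swap, rule finite_subset[OF _ fin]) (auto simp: is_clin_0 lin)
  also have "\<dots> = fsum (\<lambda>i. d i *\<^sub>C L i (fsum (\<lambda>t. c t *\<^sub>C X t i)))"
  proof -
    have colL: "fin_supp (\<lambda>t. c t *\<^sub>C X t i)" for i
      using col[of i] by (rule eventually_mono) simp
    have "d i *\<^sub>C L i (fsum (\<lambda>t. c t *\<^sub>C X t i)) = d i *\<^sub>C fsum (\<lambda>t. L i (c t *\<^sub>C X t i))" for i
      by (simp add: fsum_linear[OF lin colL])
    also have "\<dots> i = fsum (\<lambda>t. d i *\<^sub>C L i (c t *\<^sub>C X t i))" for i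
      using colL[of i] by (subst fsum_scaleC) (auto elim!: eventually_mono simp: is_clin_0 lin)
    finally have "d i *\<^sub>C L i (fsum (\<lambda>t. c t *\<^sub>C X t i)) = fsum (\<lambda>t. c t *\<^sub>C (d i *\<^sub>C L i (X t i)))" for i
      by (simp add: is_clinD lin mult.commute)
    then show ?thesis by simp
  qed
  finally show ?thesis .
qed

lemma fsum_cauchy_product:
  assumes "finite {(i, j). h i j \<noteq> 0}"
  shows "fsum (\<lambda>i. fsum (h i)) = fsum (\<lambda>s. \<Sum>i\<le>s. h i (s - i) :: 'a::comm_monoid_add)"
proof -
  obtain N where N: "\<And>i j. h i j \<noteq> 0 \<Longrightarrow> i + j < N"
  proof -
    let ?M = "Max ((\<lambda>(i, j). i + j) ` {(i, j). h i j \<noteq> 0})"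
    have "i + j \<le> ?M" if "h i j \<noteq> 0" for i j by (rule Max_ge) (use assms that in auto)
    then show ?thesis by (intro that[of "Suc ?M"]) (simp add: le_imp_less_Suc)
  qed
  have out: "h i j = 0" if "N \<le> i + j" for i j
    using N[of i j] that by linarith
  have row: "fsum (h i) = sum (h i) {..<N}" for i
    by (rule fsum_eq_sum) (auto intro: out)
  have "fsum (\<lambda>i. sum (h i) {..<N}) = (\<Sum>i<N. sum (h i) {..<N})"
    by (rule fsum_eq_sum) (auto intro!: sum.neutral out)
  also have "\<dots> = (\<Sum>(i, j)\<in>{(i, j). i + j < N}. h i j)"
    by (simp add: sum.cartesian_product, rule sum.mono_neutral_cong_right) (auto dest: N)
  also have "\<dots> = (\<Sum>s<N. \<Sum>i\<le>s. h i (s - i))"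
    by (rule sum.triangle_reindex)
  also have "\<dots> = fsum (\<lambda>s. \<Sum>i\<le>s. h i (s - i))"
    by (rule fsum_eq_sum[symmetric]) (auto intro!: sum.neutral out)
  finally show ?thesis by (simp add: row)
qed

abbreviation binom :: "int \<Rightarrow> nat \<Rightarrow> complex" where
  "binom s j \<equiv> of_int s gchoose j"

abbreviation minus_one_pow :: "int \<Rightarrow> complex" where
  "minus_one_pow l \<equiv> if even l then 1 else -1"

lemma binom_of_nat: "binom (int r) u = of_nat (r choose u)"
  by (simp add: binomial_gbinomial)

abbreviation eps :: "rat \<Rightarrow> int" where
  "eps \<alpha> \<equiv> of_bool (\<alpha> \<in> \<int>)"

lemma floor_add_of_int [simp]: "\<lfloor>x + of_int z\<rfloor> = \<lfloor>x\<rfloor> + z"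
  by (rule floor_add_int[symmetric])

lemma add_of_int_in_Ints_iff [simp]: "x + of_int z \<in> \<int> \<longleftrightarrow> x \<in> \<int>"
  by (simp add: add_in_Ints_iff_right)

lemma binom_minus_one: "(-1) ^ i * ((-1 :: complex) gchoose i) = 1"
proof -
  have "binom (-1) i = (-1) ^ i"
    using gbinomial_minus[of "1::complex" i] binomial_gbinomial[of i i, where 'a = complex] by simp
  then show ?thesis by (simp flip: power_mult_distrib)
qed

lemma binom_L_minus_one_coeff:
  "of_int p * binom \<kappa> j
   = binom (\<kappa> + 1) j * of_int (p + int j) - of_int (\<kappa> + 1 + p) * (if j = 0 then 0 else binom \<kappa> (j - 1))"
proof (cases j)
  case (Suc k)
  have "binom (\<kappa> + 1) (Suc k) = binom \<kappa> k + binom \<kappa> (Suc k)"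
    using gbinomial_Suc_Suc[of "of_int \<kappa> :: complex" k] by simp
  moreover have "(of_nat k + 1) * binom \<kappa> (Suc k) = (of_int \<kappa> - of_nat k) * binom \<kappa> k"
    using gbinomial_absorption[of k "of_int \<kappa> :: complex"] gbinomial_absorb_comp[of "of_int \<kappa> :: complex" k]
    by (simp add: add.commute)
  ultimately show ?thesis using Suc by (simp add: algebra_simps)
qed simp

lemma floor_eps_of_integral_sum:
  fixes \<beta> \<gamma> :: rat
  assumes "\<beta> + \<gamma> \<in> \<int>"
  shows "\<lfloor>\<beta> + \<gamma>\<rfloor> + eps \<beta> - \<lfloor>\<beta>\<rfloor> = \<lfloor>\<gamma>\<rfloor> + 1" "eps \<gamma> = eps \<beta>"
proof -
  obtain N where N: "\<beta> + \<gamma> = of_int N" using assms by (elim Ints_cases) simp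
  then have \<gamma>: "\<gamma> = - \<beta> + of_int N" by (simp add: algebra_simps)
  show "eps \<gamma> = eps \<beta>" unfolding \<gamma> by simp
  show "\<lfloor>\<beta> + \<gamma>\<rfloor> + eps \<beta> - \<lfloor>\<beta>\<rfloor> = \<lfloor>\<gamma>\<rfloor> + 1"
  proof (cases "\<beta> \<in> \<int>")
    case True
    then show ?thesis unfolding \<gamma> by (elim Ints_cases) simp
  next
    case False
    then have "\<lfloor>- \<beta>\<rfloor> = - \<lfloor>\<beta>\<rfloor> - 1"
      by (simp add: floor_minus ceiling_altdef) (metis Ints_of_int)
    moreover have "\<lfloor>of_int N - \<beta>\<rfloor> = \<lfloor>- \<beta>\<rfloor> + N"
      using floor_add_of_int(1)[of "- \<beta>" N] by simp
    ultimately show ?thesis unfolding \<gamma> using False N by simp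
  qed
qed

section \<open>Residues of vertex operators\<close>

text \<open>\<open>Res YM s q a w\<close> is the residue \<open>Res\<^sub>x x\<^sup>q (1 + x)\<^sup>s Y\<^sub>M(a, x) w\<close>.\<close>

definition Res :: "('v \<Rightarrow> 'm \<Rightarrow> int \<Rightarrow> 'm::cvector) \<Rightarrow> int \<Rightarrow> int \<Rightarrow> 'v \<Rightarrow> 'm \<Rightarrow> 'm" where
  "Res YM s q a w = fsum (\<lambda>j. binom s j *\<^sub>C YM a w (q + int j))"

lemma truncation_seq:
  assumes "truncation F"
  shows "\<forall>\<^sub>F t in sequentially. \<forall>n\<ge>q + int t. F a w n = 0"
proof -
  obtain N where "\<forall>n\<ge>N. F a w n = 0" using assms unfolding truncation_def by blast
  then show ?thesis by (auto simp: eventually_sequentially intro!: exI[of _ "nat (N - q)"])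
qed

locale borcherds =
  fixes Y :: "'v::cvector \<Rightarrow> 'v \<Rightarrow> int \<Rightarrow> 'v" and YM :: "'v \<Rightarrow> 'm::cvector \<Rightarrow> int \<Rightarrow> 'm"
  assumes truncation_Y: "truncation Y" and truncation_M: "truncation YM"
    and jacobi: "jacobi Y YM"
    and linear_M: "is_clin (\<lambda>w. YM a w n)" and linear_M_left: "is_clin (\<lambda>a. YM a w n)"
begin

lemma YM_zero [simp]: "YM a 0 n = 0" "YM 0 w n = 0"
  using is_clin_0[OF linear_M] is_clin_0[OF linear_M_left] by blast+

lemma borcherds_identity:
  "fsum (\<lambda>i. binom m i *\<^sub>C YM (Y a b (l + int i)) w (m + n - int i)) =
   fsum (\<lambda>i. ((-1) ^ i * binom l i) *\<^sub>C YM a (YM b w (n + int i)) (m + l - int i))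
   - fsum (\<lambda>i. ((-1) ^ i * minus_one_pow l * binom l i) *\<^sub>C YM b (YM a w (m + int i)) (n + l - int i))"
  using jacobi unfolding jacobi_def by blast

lemma fin_supp_modes: "fin_supp (\<lambda>j. c j *\<^sub>C YM a w (q + int j))"
  using truncation_seq[OF truncation_M, of q a w] by (rule eventually_mono) simp

lemma Res_zero [simp]: "Res YM s q a 0 = 0" "Res YM s q 0 w = 0"
  by (simp_all add: Res_def)

lemma is_clin_Res_left: "is_clin (\<lambda>a. Res YM s q a w)"
  unfolding is_clin_def Res_def
  by (simp add: is_clinD[OF linear_M_left] scaleC_add_right fsum_add[OF fin_supp_modes fin_supp_modes]
      fsum_scaleC[OF fin_supp_modes] mult.commute)

lemma Res_eventually_zero: "\<forall>\<^sub>F t in sequentially. \<forall>s n. q + int t \<le> n \<longrightarrow> Res YM s n a w = 0"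
  using truncation_seq[OF truncation_M, of q a w]
  by (rule eventually_mono) (simp add: Res_def fsum_def)

lemma is_clin_Res: "is_clin (\<lambda>w. Res YM s q a w)"
  unfolding is_clin_def Res_def
  by (simp add: is_clinD[OF linear_M] scaleC_add_right fsum_add[OF fin_supp_modes fin_supp_modes]
      fsum_scaleC[OF fin_supp_modes] mult.commute)

lemma Res_add_exponent:
  "Res YM (\<sigma> + \<tau>) q d w = fsum (\<lambda>u. binom \<tau> u *\<^sub>C Res YM \<sigma> (q + int u) d w)"
proof -
  have fin: "finite {(u, t). (binom \<tau> u * binom \<sigma> t) *\<^sub>C YM d w (q + int u + int t) \<noteq> 0}"
  proof (rule finite_support2I)
    show "\<forall>\<^sub>F u in sequentially. \<forall>t. (binom \<tau> u * binom \<sigma> t) *\<^sub>C YM d w (q + int u + int t) = 0"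
      using truncation_seq[OF truncation_M, of q d w] by (rule eventually_mono) simp
    show "\<forall>\<^sub>F t in sequentially. (binom \<tau> u * binom \<sigma> t) *\<^sub>C YM d w (q + int u + int t) = 0" for u
      using truncation_seq[OF truncation_M, of "q + int u" d w] by (rule eventually_mono) simp
  qed
  have "fsum (\<lambda>u. binom \<tau> u *\<^sub>C Res YM \<sigma> (q + int u) d w)
      = fsum (\<lambda>u. fsum (\<lambda>t. (binom \<tau> u * binom \<sigma> t) *\<^sub>C YM d w (q + int u + int t)))"
    unfolding Res_def by (simp add: fsum_scaleC[OF fin_supp_modes])
  also have "\<dots> = fsum (\<lambda>s. (\<Sum>u\<le>s. binom \<tau> u * binom \<sigma> (s - u)) *\<^sub>C YM d w (q + int s))"
    by (subst fsum_cauchy_product[OF fin]) (simp add: cvec.scale_sum_left)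
  also have "\<dots> = Res YM (\<sigma> + \<tau>) q d w"
    unfolding Res_def
    using gbinomial_Vandermonde[of "of_int \<tau> :: complex" "of_int \<sigma>"]
    by (simp add: atMost_atLeast0 add.commute)
  finally show ?thesis ..
qed

lemma fsum_binom_modes:
  assumes "\<forall>\<^sub>F i in sequentially. \<forall>n\<ge>p i. YM (A i) (W i) n = 0" and lin: "\<And>i. is_clin (L i)"
  shows "fsum (\<lambda>t. binom \<sigma> t *\<^sub>C fsum (\<lambda>i. d i *\<^sub>C L i (YM (A i) (W i) (p i + int t))))
      = fsum (\<lambda>i. d i *\<^sub>C L i (Res YM \<sigma> (p i) (A i) (W i)))" (is ?eq)
    and "fin_supp (\<lambda>t. binom \<sigma> t *\<^sub>C fsum (\<lambda>i. d i *\<^sub>C L i (YM (A i) (W i) (p i + int t))))" (is ?fin)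
proof -
  have fin: "finite {(t, i). YM (A i) (W i) (p i + int t) \<noteq> 0}"
  proof (rule finite_support2_swap, rule finite_support2I)
    show "\<forall>\<^sub>F i in sequentially. \<forall>t. YM (A i) (W i) (p i + int t) = 0"
      using assms(1) by (rule eventually_mono) simp
    show "\<forall>\<^sub>F t in sequentially. YM (A i) (W i) (p i + int t) = 0" for i
      using truncation_seq[OF truncation_M, of "p i" "A i" "W i"] by (rule eventually_mono) simp
  qed
  show ?eq using fsum_scaleC_fsum_linear[OF fin lin] by (simp add: Res_def)
  show ?fin using eventually_zero_row[OF fin] by (rule eventually_mono) (simp add: is_clin_0 lin)
qed

lemma borcherds_Res_right:
  "fsum (\<lambda>i. binom m i *\<^sub>C Res YM \<sigma> (m + q - int i) (Y a b (l + int i)) w) =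
   fsum (\<lambda>i. ((-1) ^ i * binom l i) *\<^sub>C YM a (Res YM \<sigma> (q + int i) b w) (m + l - int i)) -
   fsum (\<lambda>i. ((-1) ^ i * minus_one_pow l * binom l i) *\<^sub>C Res YM \<sigma> (q + l - int i) b (YM a w (m + int i)))"
proof -
  have id: "is_clin (\<lambda>x. x)" by (simp add: is_clin_def)
  note A = fsum_binom_modes[where A = "\<lambda>i. Y a b (l + int i)" and W = "\<lambda>_. w" and p = "\<lambda>i. m + q - int i"
      and L = "\<lambda>_ x. x" and d = "binom m" and \<sigma> = \<sigma>, OF _ id]
  note B = fsum_binom_modes[where A = "\<lambda>_. b" and W = "\<lambda>_. w" and p = "\<lambda>i. q + int i"
      and L = "\<lambda>i x. YM a x (m + l - int i)" and d = "\<lambda>i. (-1) ^ i * binom l i" and \<sigma> = \<sigma>, OF _ linear_M]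
  note C = fsum_binom_modes[where A = "\<lambda>_. b" and W = "\<lambda>i. YM a w (m + int i)" and p = "\<lambda>i. q + l - int i"
      and L = "\<lambda>_ x. x" and d = "\<lambda>i. (-1) ^ i * minus_one_pow l * binom l i" and \<sigma> = \<sigma>, OF _ id]
  have truncA: "\<forall>\<^sub>F i in sequentially. \<forall>n\<ge>m + q - int i. YM (Y a b (l + int i)) w n = 0"
    using truncation_seq[OF truncation_Y, of l a b] by (rule eventually_mono) simp
  have truncB: "\<forall>\<^sub>F i in sequentially. \<forall>n\<ge>q + int i. YM b w n = 0"
    by (rule truncation_seq[OF truncation_M])
  have truncC: "\<forall>\<^sub>F i in sequentially. \<forall>n\<ge>q + l - int i. YM b (YM a w (m + int i)) n = 0"
    using truncation_seq[OF truncation_M, of m a w] by (rule eventually_mono) simp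
  have "fsum (\<lambda>i. binom m i *\<^sub>C YM (Y a b (l + int i)) w (m + q - int i + int t)) =
      fsum (\<lambda>i. ((-1) ^ i * binom l i) *\<^sub>C YM a (YM b w (q + int i + int t)) (m + l - int i)) -
      fsum (\<lambda>i. ((-1) ^ i * minus_one_pow l * binom l i) *\<^sub>C YM b (YM a w (m + int i)) (q + l - int i + int t))"
    for t using borcherds_identity[of m a b l w "q + int t"] by (simp add: algebra_simps)
  then show ?thesis
    unfolding A(1)[OF truncA, symmetric] B(1)[OF truncB, symmetric] C(1)[OF truncC, symmetric]
    by (rule fsum_scaleC_eq_diff[OF _ B(2)[OF truncB] C(2)[OF truncC]])
qed

lemma fsum_binom_Res:
  "fsum (\<lambda>j. (binom \<kappa> j * (of_nat j gchoose i)) *\<^sub>C Res YM \<sigma> (q + int j - int i) d w)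
   = binom \<kappa> i *\<^sub>C Res YM (\<sigma> + \<kappa> - int i) q d w"
proof -
  have fin: "fin_supp (\<lambda>u. binom (\<kappa> - int i) u *\<^sub>C Res YM \<sigma> (q + int u) d w)"
    using Res_eventually_zero[of q d w] by (rule eventually_mono) simp
  have "fsum (\<lambda>j. (binom \<kappa> j * (of_nat j gchoose i)) *\<^sub>C Res YM \<sigma> (q + int j - int i) d w)
      = fsum (\<lambda>u. (binom \<kappa> (i + u) * (of_nat (i + u) gchoose i)) *\<^sub>C Res YM \<sigma> (q + int u) d w)"
  proof (subst fsum_shift[where k = i])
    show "(binom \<kappa> j * (of_nat j gchoose i)) *\<^sub>C Res YM \<sigma> (q + int j - int i) d w = 0" if "j < i" for j
      using that by (simp add: binomial_gbinomial[symmetric])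
    show "fin_supp (\<lambda>j. (binom \<kappa> j * (of_nat j gchoose i)) *\<^sub>C Res YM \<sigma> (q + int j - int i) d w)"
      using Res_eventually_zero[of "q - int i" d w] by (rule eventually_mono) simp
  qed simp
  also have "\<dots> = binom \<kappa> i *\<^sub>C fsum (\<lambda>u. binom (\<kappa> - int i) u *\<^sub>C Res YM \<sigma> (q + int u) d w)"
  proof -
    have "binom \<kappa> (i + u) * (of_nat (i + u) gchoose i) = binom \<kappa> i * binom (\<kappa> - int i) u" for u
      using gbinomial_trinomial_revision[of i "i + u" "of_int \<kappa> :: complex"] by simp
    then show ?thesis by (subst fsum_scaleC[OF fin]) (simp only: cvec.scale_scale)
  qed
  also have "\<dots> = binom \<kappa> i *\<^sub>C Res YM (\<sigma> + (\<kappa> - int i)) q d w"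
    by (simp add: Res_add_exponent)
  finally show ?thesis by (simp add: algebra_simps)
qed

lemma borcherds_Res:
  "fsum (\<lambda>i. binom \<kappa> i *\<^sub>C Res YM (\<sigma> + \<kappa> - int i) q (Y a b (l + int i)) w) =
   fsum (\<lambda>i. ((-1) ^ i * binom l i) *\<^sub>C Res YM \<kappa> (l - int i) a (Res YM \<sigma> (q + int i) b w)) -
   fsum (\<lambda>i. ((-1) ^ i * minus_one_pow l * binom l i) *\<^sub>C Res YM \<sigma> (q + l - int i) b (Res YM \<kappa> (int i) a w))"
proof -
  define X where "X j i = binom (int j) i *\<^sub>C Res YM \<sigma> (q + int j - int i) (Y a b (l + int i)) w" for j i
  have finX: "finite {(j, i). X j i \<noteq> 0}"
  proof (rule finite_support2_swap, rule finite_support2I)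
    show "\<forall>\<^sub>F i in sequentially. \<forall>j. X j i = 0"
      using truncation_seq[OF truncation_Y, of l a b] by (rule eventually_mono) (simp add: X_def)
    show "\<forall>\<^sub>F j in sequentially. X j i = 0" for i
      using Res_eventually_zero[of "q - int i" "Y a b (l + int i)" w] by (rule eventually_mono) (simp add: X_def)
  qed
  have id: "is_clin (\<lambda>x. x)" by (simp add: is_clin_def)
  have A: "fsum (\<lambda>j. binom \<kappa> j *\<^sub>C fsum (X j))
      = fsum (\<lambda>i. binom \<kappa> i *\<^sub>C Res YM (\<sigma> + \<kappa> - int i) q (Y a b (l + int i)) w)"
    using fsum_scaleC_fsum_linear[OF finX id, of "binom \<kappa>" "\<lambda>_. 1"] by (simp add: X_def[abs_def] fsum_binom_Res)
  note B = fsum_binom_modes[where A = "\<lambda>_. a" and W = "\<lambda>i. Res YM \<sigma> (q + int i) b w" and p = "\<lambda>i. l - int i"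
      and L = "\<lambda>_ x. x" and d = "\<lambda>i. (-1) ^ i * binom l i" and \<sigma> = \<kappa>, OF _ id]
  note C = fsum_binom_modes[where A = "\<lambda>_. a" and W = "\<lambda>_. w" and p = "\<lambda>i. int i"
      and L = "\<lambda>i. Res YM \<sigma> (q + l - int i) b" and d = "\<lambda>i. (-1) ^ i * minus_one_pow l * binom l i"
      and \<sigma> = \<kappa>, OF _ is_clin_Res]
  have truncB: "\<forall>\<^sub>F i in sequentially. \<forall>n\<ge>l - int i. YM a (Res YM \<sigma> (q + int i) b w) n = 0"
    using Res_eventually_zero[of q b w] by (rule eventually_mono) simp
  have truncC: "\<forall>\<^sub>F i in sequentially. \<forall>n\<ge>int i. YM a w n = 0"
    using truncation_seq[OF truncation_M, of 0 a w] by simp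
  have "fsum (X j) =
      fsum (\<lambda>i. ((-1) ^ i * binom l i) *\<^sub>C YM a (Res YM \<sigma> (q + int i) b w) (l - int i + int j)) -
      fsum (\<lambda>i. ((-1) ^ i * minus_one_pow l * binom l i) *\<^sub>C Res YM \<sigma> (q + l - int i) b (YM a w (int i + int j)))"
    for j using borcherds_Res_right[of "int j" \<sigma> q a b l w] by (simp add: X_def[abs_def] algebra_simps)
  then show ?thesis
    unfolding A[symmetric] B(1)[OF truncB, symmetric] C(1)[OF truncC, symmetric]
    by (rule fsum_scaleC_eq_diff[OF _ B(2)[OF truncB] C(2)[OF truncC]])
qed

lemma commutator:
  "YM a (YM b w n) m - YM b (YM a w m) n = fsum (\<lambda>i. binom m i *\<^sub>C YM (Y a b (int i)) w (m + n - int i))"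
  using borcherds_identity[of m a b 0 w n]
  by (simp add: fsum_single[where k = 0] gbinomial_0_left)

lemma commutator_Res:
  "fsum (\<lambda>i. binom m i *\<^sub>C Res YM \<sigma> (m + q - int i) (Y a b (int i)) w) =
   YM a (Res YM \<sigma> q b w) m - Res YM \<sigma> q b (YM a w m)"
  using borcherds_Res_right[of m \<sigma> q a b 0 w]
  by (simp add: fsum_single[where k = 0] gbinomial_0_left)

end

section \<open>Graded vertex operator algebras\<close>

locale qvoa =
  fixes Y :: "'v::cvector \<Rightarrow> 'v \<Rightarrow> int \<Rightarrow> 'v" and vac \<omega> :: 'v and cc :: complex
  assumes qVOA: "qVOA Y vac \<omega> cc"
begin

abbreviation V :: "rat \<Rightarrow> 'v set" where "V \<alpha> \<equiv> Vg Y \<omega> \<alpha>"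

lemma linear_Y_left: "is_clin (\<lambda>a. Y a b n)"
  using qVOA unfolding qVOA_def by (elim conjE) simp

lemma linear_Y: "is_clin (\<lambda>b. Y a b n)"
  using qVOA unfolding qVOA_def by blast

lemma graded: "\<exists>S f. finite S \<and> (\<forall>\<alpha>\<in>S. f \<alpha> \<in> V \<alpha>) \<and> v = sum f S"
  using qVOA unfolding qVOA_def by blast

lemma vacuum: "Y vac b n = (if n = -1 then b else 0)"
  using qVOA unfolding qVOA_def by blast

lemma creation: "0 \<le> n \<Longrightarrow> Y a vac n = 0" "Y a vac (-1) = a"
  using qVOA unfolding qVOA_def by blast+

lemma omega_weight: "\<omega> \<in> V 2"
  using qVOA unfolding qVOA_def by blast

lemma L_minus_one_derivative: "Y (Y \<omega> a 0) b n = - (of_int n *\<^sub>C Y a b (n - 1))"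
  using qVOA unfolding qVOA_def by blast

sublocale borcherds Y Y
  by unfold_locales (use qVOA in \<open>simp_all add: qVOA_def linear_Y linear_Y_left\<close>)

lemma subspace_V: "cvec.subspace (V \<alpha>)"
  by (auto simp: cvec.subspace_def Vg_def is_clinD[OF linear_Y] is_clin_0[OF linear_Y] algebra_simps)

lemma mode_weight:
  assumes a: "a \<in> V \<alpha>" and b: "b \<in> V \<beta>"
  shows "Y a b n \<in> V (\<alpha> + \<beta> - of_int n - 1)"
proof -
  have "fsum (\<lambda>i. binom 1 i *\<^sub>C Y (Y \<omega> a (int i)) b (1 + n - int i))
      = (\<Sum>i\<in>{0, 1}. binom 1 i *\<^sub>C Y (Y \<omega> a (int i)) b (1 + n - int i))"
    by (rule fsum_eq_sum) (use binom_of_nat[of 1] in \<open>auto simp: binomial_eq_0\<close>)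
  also have "\<dots> = (of_rat \<alpha> - of_int (1 + n)) *\<^sub>C Y a b n"
    using a by (simp add: L_minus_one_derivative Vg_def is_clinD[OF linear_Y_left] algebra_simps)
  finally have "Y \<omega> (Y a b n) 1 = (of_rat \<beta> + of_rat \<alpha> - of_int (1 + n)) *\<^sub>C Y a b n"
    using commutator[of \<omega> a b n 1] b by (simp add: Vg_def is_clinD[OF linear_Y] algebra_simps)
  moreover have "(of_rat (\<alpha> + \<beta> - of_int n - 1) :: complex) = of_rat \<beta> + of_rat \<alpha> - of_int (1 + n)"
    by (simp add: of_rat_add of_rat_diff)
  ultimately show ?thesis unfolding Vg_def mem_Collect_eq by (simp only:)
qed

lemma L_minus_one_weight: "a \<in> V \<alpha> \<Longrightarrow> Y \<omega> a 0 \<in> V (\<alpha> + 1)"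
  using mode_weight[OF omega_weight, of a \<alpha> 0] by (simp add: algebra_simps)

lemma vac_weight: "vac \<in> V 0"
  by (simp add: Vg_def creation)

lemma sum_homogeneous_eq_0:
  assumes "finite S" "\<forall>\<alpha>\<in>S. g \<alpha> \<in> V \<alpha>" "sum g S = 0"
  shows "\<forall>\<alpha>\<in>S. g \<alpha> = 0"
  using assms
proof (induct S arbitrary: g rule: finite_induct)
  case (insert \<beta> S)
  define h where "h \<alpha> = (of_rat \<alpha> - of_rat \<beta>) *\<^sub>C g \<alpha>" for \<alpha>
  have g\<beta>: "g \<beta> = - sum g S" using insert by (simp add: eq_neg_iff_add_eq_0)
  have "Y \<omega> (sum g S) 1 = (\<Sum>\<alpha>\<in>S. of_rat \<alpha> *\<^sub>C g \<alpha>)"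
    using insert by (simp add: is_clin_sum[OF linear_Y] Vg_def)
  moreover have "Y \<omega> (sum g S) 1 = of_rat \<beta> *\<^sub>C sum g S"
    using insert g\<beta> is_clin_diff[OF linear_Y, of \<omega> 0 "g \<beta>" 1] by (simp add: Vg_def is_clin_0[OF linear_Y])
  ultimately have "sum h S = 0"
    by (simp add: h_def cvec.scale_left_diff_distrib sum_subtractf cvec.scale_sum_right)
  moreover have "\<forall>\<alpha>\<in>S. h \<alpha> \<in> V \<alpha>" using insert by (simp add: h_def cvec.subspace_scale[OF subspace_V])
  ultimately have "\<forall>\<alpha>\<in>S. h \<alpha> = 0" using insert by blast
  then have "\<forall>\<alpha>\<in>S. g \<alpha> = 0" using insert by (auto simp: h_def)
  then show ?case using g\<beta> by simp
qed simp

lemma hcomp_sum: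
  assumes S: "finite S" "\<forall>\<beta>\<in>S. f \<beta> \<in> V \<beta>"
  shows "hcomp Y \<omega> \<alpha> (sum f S) = (if \<alpha> \<in> S then f \<alpha> else 0)"
  unfolding hcomp_def
proof (rule the_equality)
  fix w assume "\<exists>S' f'. finite S' \<and> (\<forall>\<beta>\<in>S'. f' \<beta> \<in> V \<beta>) \<and> sum f S = sum f' S'
    \<and> w = (if \<alpha> \<in> S' then f' \<alpha> else 0)"
  then obtain S' f' where S': "finite S'" "\<forall>\<beta>\<in>S'. f' \<beta> \<in> V \<beta>" "sum f S = sum f' S'"
    and w: "w = (if \<alpha> \<in> S' then f' \<alpha> else 0)"
    by blast
  define g where "g \<beta> = (if \<beta> \<in> S then f \<beta> else 0) - (if \<beta> \<in> S' then f' \<beta> else 0)" for \<beta>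
  have "sum g (S \<union> S') = sum f S - sum f' S'"
    unfolding g_def sum_subtractf using S S'
    by (simp add: sum.mono_neutral_cong_right[of "S \<union> S'" S] sum.mono_neutral_cong_right[of "S \<union> S'" S'])
  moreover have "\<forall>\<beta>\<in>S \<union> S'. g \<beta> \<in> V \<beta>"
    using S S' by (auto simp: g_def cvec.subspace_diff[OF subspace_V] cvec.subspace_0[OF subspace_V])
  ultimately have "\<forall>\<beta>\<in>S \<union> S'. g \<beta> = 0"
    using sum_homogeneous_eq_0[of "S \<union> S'" g] S S' by simp
  then show "w = (if \<alpha> \<in> S then f \<alpha> else 0)"
    using w by (cases "\<alpha> \<in> S \<union> S'") (auto simp: g_def split: if_splits)
qed (use S in blast)

definition hsupp :: "'v \<Rightarrow> rat set" where
  "hsupp v = {\<alpha>. hcomp Y \<omega> \<alpha> v \<noteq> 0}"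

lemma hcomp_decomposition:
  "finite (hsupp v) \<and> (\<forall>\<alpha>. hcomp Y \<omega> \<alpha> v \<in> V \<alpha>) \<and> v = (\<Sum>\<alpha>\<in>hsupp v. hcomp Y \<omega> \<alpha> v)"
proof -
  obtain S f where S: "finite S" "\<forall>\<alpha>\<in>S. f \<alpha> \<in> V \<alpha>" "v = sum f S" using graded by blast
  have h: "hcomp Y \<omega> \<alpha> v = (if \<alpha> \<in> S then f \<alpha> else 0)" for \<alpha> using hcomp_sum S by simp
  have sub: "hsupp v \<subseteq> S" by (auto simp: hsupp_def h split: if_splits)
  have "(\<Sum>\<alpha>\<in>hsupp v. hcomp Y \<omega> \<alpha> v) = (\<Sum>\<alpha>\<in>S. hcomp Y \<omega> \<alpha> v)"
    by (rule sum.mono_neutral_left) (use S sub in \<open>auto simp: hsupp_def\<close>)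
  also have "\<dots> = sum f S" by (rule sum.cong) (simp_all add: h)
  finally show ?thesis
    using S sub h by (auto intro: finite_subset simp: cvec.subspace_0[OF subspace_V])
qed

lemma finite_hsupp: "finite (hsupp v)"
  and hcomp_weight: "hcomp Y \<omega> \<alpha> v \<in> V \<alpha>"
  and sum_hcomp: "(\<Sum>\<alpha>\<in>hsupp v. hcomp Y \<omega> \<alpha> v) = v"
  using hcomp_decomposition by metis+

lemma hcomp_homogeneous: "a \<in> V \<beta> \<Longrightarrow> hcomp Y \<omega> \<alpha> a = (if \<alpha> = \<beta> then a else 0)"
  using hcomp_sum[of "{\<beta>}" "\<lambda>_. a" \<alpha>] by simp

lemma homogeneous_induct [case_names zero add homogeneous]:
  assumes "P 0" "\<And>a b. P a \<Longrightarrow> P b \<Longrightarrow> P (a + b)" "\<And>\<alpha> a. a \<in> V \<alpha> \<Longrightarrow> P a"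
  shows "P v"
proof -
  have "P (\<Sum>\<alpha>\<in>T. hcomp Y \<omega> \<alpha> v)" if "finite T" for T
    using that by (induct T rule: finite_induct) (auto intro: assms hcomp_weight)
  then show ?thesis using finite_hsupp sum_hcomp by metis
qed

lemma hcomp_eq_if_sum:
  assumes "finite T" "hsupp v \<subseteq> T"
  shows "v = (\<Sum>\<alpha>\<in>T. hcomp Y \<omega> \<alpha> v)"
proof -
  have "(\<Sum>\<alpha>\<in>hsupp v. hcomp Y \<omega> \<alpha> v) = (\<Sum>\<alpha>\<in>T. hcomp Y \<omega> \<alpha> v)"
    by (rule sum.mono_neutral_left) (use assms in \<open>auto simp: hsupp_def\<close>)
  then show ?thesis by (simp add: sum_hcomp)
qed

lemma is_clin_hcomp: "is_clin (hcomp Y \<omega> \<alpha>)"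
  unfolding is_clin_def
proof (intro conjI allI)
  fix a b
  let ?T = "hsupp a \<union> hsupp b"
  have T: "finite ?T" by (simp add: finite_hsupp)
  have "a + b = (\<Sum>\<beta>\<in>?T. hcomp Y \<omega> \<beta> a + hcomp Y \<omega> \<beta> b)"
    using hcomp_eq_if_sum[OF T, of a] hcomp_eq_if_sum[OF T, of b] by (simp add: sum.distrib)
  then show "hcomp Y \<omega> \<alpha> (a + b) = hcomp Y \<omega> \<alpha> a + hcomp Y \<omega> \<alpha> b"
    using hcomp_sum[OF T, of "\<lambda>\<beta>. hcomp Y \<omega> \<beta> a + hcomp Y \<omega> \<beta> b"]
    by (auto simp: hcomp_weight cvec.subspace_add[OF subspace_V] hsupp_def)
next
  fix c a
  have T: "finite (hsupp a)" by (rule finite_hsupp)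
  have "c *\<^sub>C a = (\<Sum>\<beta>\<in>hsupp a. c *\<^sub>C hcomp Y \<omega> \<beta> a)"
    using hcomp_eq_if_sum[OF T, of a] by (simp add: cvec.scale_sum_right[symmetric])
  then show "hcomp Y \<omega> \<alpha> (c *\<^sub>C a) = c *\<^sub>C hcomp Y \<omega> \<alpha> a"
    using hcomp_sum[OF T, of "\<lambda>\<beta>. c *\<^sub>C hcomp Y \<omega> \<beta> a"]
    by (auto simp: hcomp_weight cvec.subspace_scale[OF subspace_V] hsupp_def)
qed

definition graded_ext :: "(rat \<Rightarrow> 'v \<Rightarrow> 'x::comm_monoid_add) \<Rightarrow> 'v \<Rightarrow> 'x" where
  "graded_ext F v = (\<Sum>\<alpha>\<in>hsupp v. F \<alpha> (hcomp Y \<omega> \<alpha> v))"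

lemma graded_ext_eq_sum:
  assumes "finite T" "hsupp v \<subseteq> T" "\<And>\<alpha>. F \<alpha> 0 = 0"
  shows "graded_ext F v = (\<Sum>\<alpha>\<in>T. F \<alpha> (hcomp Y \<omega> \<alpha> v))"
  unfolding graded_ext_def by (rule sum.mono_neutral_left) (use assms in \<open>auto simp: hsupp_def\<close>)

lemma graded_ext_homogeneous:
  assumes "a \<in> V \<beta>" "\<And>\<alpha>. F \<alpha> 0 = 0"
  shows "graded_ext F a = F \<beta> a"
proof -
  have "hsupp a \<subseteq> {\<beta>}" using assms(1) by (auto simp: hsupp_def hcomp_homogeneous split: if_splits)
  then show ?thesis using graded_ext_eq_sum[of "{\<beta>}" a F] assms by (simp add: hcomp_homogeneous)
qed

lemma is_clin_graded_ext:
  assumes "\<And>\<alpha>. is_clin (F \<alpha>)"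
  shows "is_clin (graded_ext F)"
  unfolding is_clin_def
proof (intro conjI allI)
  fix a b
  let ?T = "hsupp a \<union> hsupp b \<union> hsupp (a + b)"
  have T: "finite ?T" by (simp add: finite_hsupp)
  have "graded_ext F v = (\<Sum>\<alpha>\<in>?T. F \<alpha> (hcomp Y \<omega> \<alpha> v))" if "v \<in> {a, b, a + b}" for v
    by (rule graded_ext_eq_sum[OF T]) (use that in \<open>auto simp: is_clin_0 assms\<close>)
  then show "graded_ext F (a + b) = graded_ext F a + graded_ext F b"
    by (simp add: is_clinD[OF is_clin_hcomp] is_clinD[OF assms] sum.distrib)
next
  fix c a
  let ?T = "hsupp a \<union> hsupp (c *\<^sub>C a)"
  have T: "finite ?T" by (simp add: finite_hsupp)
  have "graded_ext F v = (\<Sum>\<alpha>\<in>?T. F \<alpha> (hcomp Y \<omega> \<alpha> v))" if "v \<in> {a, c *\<^sub>C a}" for v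
    by (rule graded_ext_eq_sum[OF T]) (use that in \<open>auto simp: is_clin_0 assms\<close>)
  then show "graded_ext F (c *\<^sub>C a) = c *\<^sub>C graded_ext F a"
    by (simp add: is_clinD[OF is_clin_hcomp] is_clinD[OF assms] cvec.scale_sum_right)
qed

lemma is_clin_graded_ext_param:
  assumes "\<And>\<alpha> x. is_clin (G \<alpha> x)"
  shows "is_clin (\<lambda>b. graded_ext (\<lambda>\<alpha> x. G \<alpha> x b) a)"
  using assms by (simp add: is_clin_def graded_ext_def sum.distrib cvec.scale_sum_right)

subsection \<open>The product \<open>*\<close> and the subspace \<open>O(V)\<close>\<close>

lemma starh_eq_Res: "starh Y \<alpha> a b = (if \<alpha> \<in> \<int> then Res Y \<lfloor>\<alpha>\<rfloor> (-1) a b else 0)"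
  by (simp add: starh_def Res_def algebra_simps)

lemma star_eq_graded_ext: "star Y \<omega> a b = graded_ext (\<lambda>\<alpha> x. starh Y \<alpha> x b) a"
  by (simp add: star_def graded_ext_def hsupp_def)

lemma star_homogeneous: "a \<in> V \<alpha> \<Longrightarrow> star Y \<omega> a b = (if \<alpha> \<in> \<int> then Res Y \<lfloor>\<alpha>\<rfloor> (-1) a b else 0)"
  unfolding star_eq_graded_ext by (subst graded_ext_homogeneous) (simp_all add: starh_eq_Res)

lemma star_integral: "a \<in> V (of_int k) \<Longrightarrow> star Y \<omega> a b = Res Y k (-1) a b"
  by (simp add: star_homogeneous)

lemma star_nonintegral: "a \<in> V \<alpha> \<Longrightarrow> \<alpha> \<notin> \<int> \<Longrightarrow> star Y \<omega> a b = 0"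
  by (simp add: star_homogeneous)

lemma is_clin_star_left: "is_clin (\<lambda>a. star Y \<omega> a b)"
  unfolding star_eq_graded_ext
  by (rule is_clin_graded_ext) (simp add: starh_eq_Res is_clin_def is_clinD[OF is_clin_Res_left])

lemma is_clin_star_right: "is_clin (\<lambda>b. star Y \<omega> a b)"
  unfolding star_eq_graded_ext
  by (rule is_clin_graded_ext_param) (simp add: starh_eq_Res is_clin_def is_clinD[OF is_clin_Res])

lemma star_zero [simp]: "star Y \<omega> 0 b = 0" "star Y \<omega> a 0 = 0"
  using is_clin_0[OF is_clin_star_left] is_clin_0[OF is_clin_star_right] by blast+

lemma star_Res_left:
  "star Y \<omega> (Res Y s q b d) c = fsum (\<lambda>i. binom s i *\<^sub>C star Y \<omega> (Y b d (q + int i)) c)"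
  unfolding Res_def
  by (subst fsum_linear[OF is_clin_star_left fin_supp_modes]) (simp add: is_clinD[OF is_clin_star_left])

lemma Oh_eq_Res: "Oh Y \<alpha> a b = Res Y \<lfloor>\<alpha>\<rfloor> (-1 - eps \<alpha>) a b"
  by (simp add: Oh_def Res_def algebra_simps)

lemma OV_eq_span: "OV Y \<omega> = cvec.span {Res Y \<lfloor>\<alpha>\<rfloor> (-1 - eps \<alpha>) a b | \<alpha> a b. a \<in> V \<alpha>}"
  by (simp add: OV_def Oh_eq_Res cspan_eq_span)

lemma subspace_OV: "cvec.subspace (OV Y \<omega>)"
  by (simp add: OV_eq_span)

lemmas OV_0 = cvec.subspace_0[OF subspace_OV]
  and OV_add = cvec.subspace_add[OF subspace_OV]
  and OV_diff = cvec.subspace_diff[OF subspace_OV]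
  and OV_scale = cvec.subspace_scale[OF subspace_OV]
  and OV_neg = cvec.subspace_neg[OF subspace_OV]
  and OV_fsum = fsum_in_subspace[OF subspace_OV]

lemma Res_generator_in_OV: "a \<in> V \<alpha> \<Longrightarrow> Res Y \<lfloor>\<alpha>\<rfloor> (-1 - eps \<alpha>) a b \<in> OV Y \<omega>"
  unfolding OV_eq_span by (rule cvec.span_base) blast

lemma OV_induct:
  assumes "u \<in> OV Y \<omega>" "is_clin f" "cvec.subspace T"
    and "\<And>\<alpha> a b. a \<in> V \<alpha> \<Longrightarrow> f (Res Y \<lfloor>\<alpha>\<rfloor> (-1 - eps \<alpha>) a b) \<in> T"
  shows "f u \<in> T"
  using is_clin_span_induct[OF assms(2,3) _ assms(1)[unfolded OV_eq_span]] assms(4) by blast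

text \<open>Integration by parts against \<open>Y(L(-1)a, x) = d/dx Y(a, x)\<close>, i.e.
  \<open>Res\<^sub>x x\<^sup>p (1 + x)\<^sup>\<kappa>\<^sup>+\<^sup>1 Y(L(-1)a, x) = - Res\<^sub>x (x\<^sup>p (1 + x)\<^sup>\<kappa>\<^sup>+\<^sup>1)' Y(a, x)\<close>;
  it lets the power of \<open>x\<close> in the generators of \<open>O(V)\<close> be lowered.\<close>

lemma Res_L_minus_one_recursion:
  "of_int p *\<^sub>C Res Y \<kappa> (p - 1) a d
   = - Res Y (\<kappa> + 1) p (Y \<omega> a 0) d - of_int (\<kappa> + 1 + p) *\<^sub>C Res Y \<kappa> p a d"
proof -
  define A where "A j = Y a d (p - 1 + int j)" for j
  define c where "c j = (if j = 0 then 0 else binom \<kappa> (j - 1))" for j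
  obtain N where N: "\<And>n. p - 1 + int N \<le> n \<Longrightarrow> Y a d n = 0"
    using truncation_seq[OF truncation_Y, of "p - 1" a d] by (auto simp: eventually_sequentially)
  have A0: "A j = 0" if "N \<le> j" for j using N that by (simp add: A_def)
  define S where "S = {..<Suc N}"
  have R1: "Res Y \<kappa> (p - 1) a d = (\<Sum>j\<in>S. binom \<kappa> j *\<^sub>C A j)"
    unfolding Res_def A_def S_def by (rule fsum_eq_sum) (auto intro: N)
  have "Res Y (\<kappa> + 1) p (Y \<omega> a 0) d = fsum (\<lambda>j. (- (binom (\<kappa> + 1) j * of_int (p + int j))) *\<^sub>C A j)"
    unfolding Res_def A_def by (simp add: L_minus_one_derivative algebra_simps)
  also have "\<dots> = (\<Sum>j\<in>S. (- (binom (\<kappa> + 1) j * of_int (p + int j))) *\<^sub>C A j)"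
    by (rule fsum_eq_sum) (auto simp: A0 S_def)
  finally have R2: "Res Y (\<kappa> + 1) p (Y \<omega> a 0) d = (\<Sum>j\<in>S. (- (binom (\<kappa> + 1) j * of_int (p + int j))) *\<^sub>C A j)" .
  have "A (Suc j) = Y a d (p + int j)" for j by (simp add: A_def)
  then have "Res Y \<kappa> p a d = (\<Sum>j<N. binom \<kappa> j *\<^sub>C A (Suc j))"
    unfolding Res_def by (simp only:) (rule fsum_eq_sum, auto intro: N)
  also have "\<dots> = (\<Sum>j\<in>S. c j *\<^sub>C A j)"
    unfolding S_def by (subst sum.lessThan_Suc_shift) (simp add: c_def)
  finally have R3: "Res Y \<kappa> p a d = (\<Sum>j\<in>S. c j *\<^sub>C A j)" .
  have coeff: "(of_int p * binom \<kappa> j) *\<^sub>C x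
      = - ((- (binom (\<kappa> + 1) j * of_int (p + int j))) *\<^sub>C x) - of_int (\<kappa> + 1 + p) *\<^sub>C (c j *\<^sub>C x)" for j x
    unfolding c_def binom_L_minus_one_coeff by (simp add: cvec.scale_left_diff_distrib)
  have "of_int p *\<^sub>C Res Y \<kappa> (p - 1) a d = (\<Sum>j\<in>S. (of_int p * binom \<kappa> j) *\<^sub>C A j)"
    by (simp add: R1 cvec.scale_sum_right)
  also have "\<dots> = (\<Sum>j\<in>S. - ((- (binom (\<kappa> + 1) j * of_int (p + int j))) *\<^sub>C A j)
      - of_int (\<kappa> + 1 + p) *\<^sub>C (c j *\<^sub>C A j))"
    by (simp only: coeff)
  finally show ?thesis
    by (simp only: R2 R3 sum_subtractf sum_negf cvec.scale_sum_right)
qed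

lemma Res_lowered_in_OV: "a \<in> V \<alpha> \<Longrightarrow> Res Y \<lfloor>\<alpha>\<rfloor> (-1 - eps \<alpha> - int n) a d \<in> OV Y \<omega>"
proof (induct n arbitrary: \<alpha> a d)
  case 0
  then show ?case using Res_generator_in_OV by simp
next
  case (Suc n)
  define p where "p = -1 - eps \<alpha> - int n"
  have "Res Y (\<lfloor>\<alpha>\<rfloor> + 1) p (Y \<omega> a 0) d \<in> OV Y \<omega>"
    using Suc(1)[OF L_minus_one_weight[OF Suc(2)], of d] by (simp add: p_def)
  moreover have "Res Y \<lfloor>\<alpha>\<rfloor> p a d \<in> OV Y \<omega>" using Suc by (simp add: p_def)
  ultimately have "of_int p *\<^sub>C Res Y \<lfloor>\<alpha>\<rfloor> (p - 1) a d \<in> OV Y \<omega>"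
    unfolding Res_L_minus_one_recursion by (intro OV_diff OV_scale OV_neg)
  then have "inverse (of_int p) *\<^sub>C (of_int p *\<^sub>C Res Y \<lfloor>\<alpha>\<rfloor> (p - 1) a d) \<in> OV Y \<omega>"
    by (rule OV_scale)
  moreover have "p \<noteq> 0" by (simp add: p_def)
  ultimately have "Res Y \<lfloor>\<alpha>\<rfloor> (p - 1) a d \<in> OV Y \<omega>" by simp
  moreover have "p - 1 = -1 - eps \<alpha> - int (Suc n)" by (simp add: p_def)
  ultimately show ?case by simp
qed

lemma Res_raised_in_OV:
  assumes "a \<in> V \<alpha>" "r \<le> n"
  shows "Res Y (\<lfloor>\<alpha>\<rfloor> + int r) (-1 - eps \<alpha> - int n) a d \<in> OV Y \<omega>"
  unfolding Res_add_exponent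
proof (rule OV_fsum)
  fix u
  show "binom (int r) u *\<^sub>C Res Y \<lfloor>\<alpha>\<rfloor> (-1 - eps \<alpha> - int n + int u) a d \<in> OV Y \<omega>"
  proof (cases "u \<le> r")
    case True
    then have "-1 - eps \<alpha> - int n + int u = -1 - eps \<alpha> - int (n - u)" using assms(2) by simp
    then show ?thesis by (simp only:) (rule OV_scale, rule Res_lowered_in_OV[OF assms(1)])
  qed (simp add: binomial_gbinomial[symmetric] binomial_eq_0 OV_0)
qed

lemma Res_vac: "Res Y s (-1) a vac = a"
  unfolding Res_def by (subst fsum_single[where k = 0]) (auto simp: creation)

lemma nonintegral_in_OV: "a \<in> V \<alpha> \<Longrightarrow> \<alpha> \<notin> \<int> \<Longrightarrow> a \<in> OV Y \<omega>"
  using Res_generator_in_OV[of a \<alpha> vac] by (simp add: Res_vac)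

subsection \<open>The algebra \<open>A(V)\<close>\<close>

lemma mode_weight_integral:
  assumes "a \<in> V (of_int k)" "b \<in> V \<beta>"
  shows "Y a b (-1 + int i) \<in> V (\<beta> + of_int (k - int i))"
proof -
  have "of_int k + \<beta> - of_int (-1 + int i) - 1 = \<beta> + of_int (k - int i)" by simp
  from this mode_weight[OF assms, of "-1 + int i"] show ?thesis by (simp only:)
qed

lemma generator_mode_weight:
  assumes "b \<in> V \<beta>" "c \<in> V \<gamma>"
  shows "Y b c (-1 - eps \<beta> + int i) \<in> V ((\<beta> + \<gamma>) + of_int (eps \<beta> - int i))"
proof -
  have "\<beta> + \<gamma> - of_int (-1 - eps \<beta> + int i) - 1 = (\<beta> + \<gamma>) + of_int (eps \<beta> - int i)" by simp
  from this mode_weight[OF assms, of "-1 - eps \<beta> + int i"] show ?thesis by (simp only:)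
qed

lemma star_mode_integral:
  assumes "a \<in> V (of_int k)" "b \<in> V \<beta>" "\<beta> \<in> \<int>"
  shows "star Y \<omega> (Y a b (-1 + int i)) c = Res Y (\<lfloor>\<beta>\<rfloor> + k - int i) (-1) (Y a b (-1 + int i)) c"
  by (simp only: star_homogeneous[OF mode_weight_integral[OF assms(1,2)]] floor_add_of_int
      add_of_int_in_Ints_iff add_diff_eq assms(3) if_True)

lemma star_mode_nonintegral:
  assumes "a \<in> V (of_int k)" "b \<in> V \<beta>" "\<beta> \<notin> \<int>"
  shows "star Y \<omega> (Y a b (-1 + int i)) c = 0"
  by (rule star_nonintegral[OF mode_weight_integral[OF assms(1,2)]])
    (simp only: add_of_int_in_Ints_iff assms(3) not_False_eq_True)

text \<open>The Borcherds identity with \<open>l = -1\<close>: apart from its \<open>i = 0\<close> term \<open>a * Res(b) c\<close>, the right-hand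
  side consists of residues with a low power of \<open>x\<close>, which lie in \<open>O(V)\<close>.\<close>

lemma Res_assoc_mod_OV:
  assumes a: "a \<in> V (of_int k)" and b: "b \<in> V \<beta>" and q: "q \<le> - eps \<beta>"
  shows "Res Y k (-1) a (Res Y \<lfloor>\<beta>\<rfloor> q b c)
    - fsum (\<lambda>i. binom k i *\<^sub>C Res Y (\<lfloor>\<beta>\<rfloor> + k - int i) q (Y a b (-1 + int i)) c) \<in> OV Y \<omega>"
proof -
  define R where "R i = Res Y k (-1 - int i) a (Res Y \<lfloor>\<beta>\<rfloor> (q + int i) b c)" for i
  define S where "S i = ((-1) ^ i * minus_one_pow (-1) * binom (-1) i) *\<^sub>C
    Res Y \<lfloor>\<beta>\<rfloor> (q + -1 - int i) b (Res Y k (int i) a c)" for i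
  have fin: "fin_supp R"
    using Res_eventually_zero[of q b c] by (rule eventually_mono) (simp add: R_def)
  have "fsum (\<lambda>i. binom k i *\<^sub>C Res Y (\<lfloor>\<beta>\<rfloor> + k - int i) q (Y a b (-1 + int i)) c) = fsum R - fsum S"
    using borcherds_Res[of k "\<lfloor>\<beta>\<rfloor>" q a b "-1" c] by (simp add: R_def[abs_def] S_def[abs_def] binom_minus_one)
  also have "\<dots> = R 0 + fsum (\<lambda>u. R (Suc u)) - fsum S"
    by (simp add: fsum_split_first[OF fin])
  finally have "R 0 - fsum (\<lambda>i. binom k i *\<^sub>C Res Y (\<lfloor>\<beta>\<rfloor> + k - int i) q (Y a b (-1 + int i)) c)
      = fsum S - fsum (\<lambda>u. R (Suc u))"
    by (simp add: algebra_simps)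
  also have "\<dots> \<in> OV Y \<omega>"
  proof (intro OV_diff OV_fsum)
    show "S i \<in> OV Y \<omega>" for i
    proof -
      have "q + -1 - int i = -1 - eps \<beta> - int (nat (- q - eps \<beta>) + i)" using q by simp
      then show ?thesis unfolding S_def by (simp only:) (intro OV_scale Res_lowered_in_OV[OF b])
    qed
    show "R (Suc u) \<in> OV Y \<omega>" for u
      using Res_lowered_in_OV[OF a, of u] by (simp add: R_def)
  qed
  finally show ?thesis by (simp add: R_def)
qed

lemma star_generator_left:
  assumes a: "a \<in> V \<alpha>" and b: "b \<in> V \<beta>"
  shows "star Y \<omega> a (Res Y \<lfloor>\<beta>\<rfloor> (-1 - eps \<beta>) b c) \<in> OV Y \<omega>"
proof (cases "\<alpha> \<in> \<int>")
  case False
  then show ?thesis using a by (simp add: star_nonintegral OV_0)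
next
  case True
  then obtain k where k: "\<alpha> = of_int k" by (elim Ints_cases)
  have a': "a \<in> V (of_int k)" using a k by simp
  let ?F = "fsum (\<lambda>i. binom k i *\<^sub>C Res Y (\<lfloor>\<beta>\<rfloor> + k - int i) (-1 - eps \<beta>) (Y a b (-1 + int i)) c)"
  have "?F \<in> OV Y \<omega>"
  proof (rule OV_fsum)
    fix i
    show "binom k i *\<^sub>C Res Y (\<lfloor>\<beta>\<rfloor> + k - int i) (-1 - eps \<beta>) (Y a b (-1 + int i)) c \<in> OV Y \<omega>"
      using Res_generator_in_OV[OF mode_weight_integral[OF a' b, of i], of c]
      unfolding floor_add_of_int add_of_int_in_Ints_iff add_diff_eq by (rule OV_scale)
  qed
  moreover have "Res Y k (-1) a (Res Y \<lfloor>\<beta>\<rfloor> (-1 - eps \<beta>) b c) - ?F \<in> OV Y \<omega>"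
    by (rule Res_assoc_mod_OV[OF a' b]) simp
  ultimately show ?thesis using OV_add by (fastforce simp: star_integral[OF a'])
qed

lemma OV_left_ideal:
  assumes "u \<in> OV Y \<omega>"
  shows "star Y \<omega> a u \<in> OV Y \<omega>"
  using assms is_clin_star_right subspace_OV
proof (rule OV_induct[where f = "star Y \<omega> a"])
  fix \<beta> b c
  assume "b \<in> V \<beta>"
  then show "star Y \<omega> a (Res Y \<lfloor>\<beta>\<rfloor> (-1 - eps \<beta>) b c) \<in> OV Y \<omega>"
    by (induct a rule: homogeneous_induct)
      (auto simp: is_clin_0[OF is_clin_star_left] is_clinD[OF is_clin_star_left] OV_0 OV_add
        star_generator_left)
qed

lemma star_assoc_homogeneous:
  assumes a: "a \<in> V \<alpha>" and b: "b \<in> V \<beta>"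
  shows "star Y \<omega> (star Y \<omega> a b) c - star Y \<omega> a (star Y \<omega> b c) \<in> OV Y \<omega>"
proof (cases "\<alpha> \<in> \<int>")
  case False
  then show ?thesis using a by (simp add: star_nonintegral OV_0)
next
  case True
  then obtain k where k: "\<alpha> = of_int k" by (elim Ints_cases)
  have a': "a \<in> V (of_int k)" using a k by simp
  have ab: "star Y \<omega> (star Y \<omega> a b) c = fsum (\<lambda>i. binom k i *\<^sub>C star Y \<omega> (Y a b (-1 + int i)) c)"
    by (simp add: star_integral[OF a'] star_Res_left)
  show ?thesis
  proof (cases "\<beta> \<in> \<int>")
    case False
    then show ?thesis
      using b unfolding ab star_mode_nonintegral[OF a' b False] by (simp add: star_nonintegral OV_0)
  next
    case True
    have "Res Y k (-1) a (Res Y \<lfloor>\<beta>\<rfloor> (-1) b c)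
      - fsum (\<lambda>i. binom k i *\<^sub>C Res Y (\<lfloor>\<beta>\<rfloor> + k - int i) (-1) (Y a b (-1 + int i)) c) \<in> OV Y \<omega>"
      by (rule Res_assoc_mod_OV[OF a' b]) (simp add: True)
    then have "- (Res Y k (-1) a (Res Y \<lfloor>\<beta>\<rfloor> (-1) b c)
      - fsum (\<lambda>i. binom k i *\<^sub>C Res Y (\<lfloor>\<beta>\<rfloor> + k - int i) (-1) (Y a b (-1 + int i)) c)) \<in> OV Y \<omega>"
      by (rule OV_neg)
    then show ?thesis
      using True b unfolding ab star_mode_integral[OF a' b True]
      by (simp add: star_homogeneous star_integral[OF a'])
  qed
qed

lemma star_assoc_mod_OV: "star Y \<omega> (star Y \<omega> a b) c - star Y \<omega> a (star Y \<omega> b c) \<in> OV Y \<omega>"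
proof (induct a rule: homogeneous_induct)
  case (add a a')
  then show ?case
    by (simp add: is_clinD[OF is_clin_star_left] is_clinD[OF is_clin_star_right])
      (metis OV_add add_diff_add)
next
  case (homogeneous \<alpha> a)
  show ?case
  proof (induct b rule: homogeneous_induct)
    case (add b b')
    then show ?case
      by (simp add: is_clinD[OF is_clin_star_left] is_clinD[OF is_clin_star_right])
        (metis OV_add add_diff_add)
  qed (simp_all add: OV_0 star_assoc_homogeneous[OF homogeneous])
qed (simp add: OV_0)

lemma star_generator_right:
  assumes b: "b \<in> V \<beta>" and c: "c \<in> V \<gamma>"
  shows "star Y \<omega> (Res Y \<lfloor>\<beta>\<rfloor> (-1 - eps \<beta>) b c) a \<in> OV Y \<omega>"
proof -
  define q where "q = -1 - eps \<beta>"
  define s where "s = \<lfloor>\<beta>\<rfloor>"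
  have w: "Y b c (q + int i) \<in> V ((\<beta> + \<gamma>) + of_int (eps \<beta> - int i))" for i
    unfolding q_def by (rule generator_mode_weight[OF b c])
  have expand: "star Y \<omega> (Res Y s q b c) a = fsum (\<lambda>i. binom s i *\<^sub>C star Y \<omega> (Y b c (q + int i)) a)"
    by (rule star_Res_left)
  show ?thesis
  proof (cases "\<beta> + \<gamma> \<in> \<int>")
    case False
    have "star Y \<omega> (Y b c (q + int i)) a = 0" for i
      by (rule star_nonintegral[OF w]) (simp only: add_of_int_in_Ints_iff False not_False_eq_True)
    then show ?thesis using expand by (simp add: s_def q_def OV_0)
  next
    case True
    define W where "W = \<lfloor>\<beta> + \<gamma>\<rfloor> + eps \<beta>"
    have W: "W - s = \<lfloor>\<gamma>\<rfloor> + int 1" "eps \<gamma> = eps \<beta>"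
      using floor_eps_of_integral_sum[OF True] by (simp_all add: W_def s_def)
    have "star Y \<omega> (Y b c (q + int i)) a = Res Y (W - s + s - int i) (-1) (Y b c (q + int i)) a" for i
    proof -
      have "\<lfloor>\<beta> + \<gamma>\<rfloor> + (eps \<beta> - int i) = W - s + s - int i" by (simp add: W_def)
      then show ?thesis
        by (simp only: star_homogeneous[OF w] floor_add_of_int add_of_int_in_Ints_iff True if_True)
    qed
    then have "star Y \<omega> (Res Y s q b c) a
      = fsum (\<lambda>i. ((-1) ^ i * binom q i) *\<^sub>C Res Y s (q - int i) b (Res Y (W - s) (-1 + int i) c a))
      - fsum (\<lambda>i. ((-1) ^ i * minus_one_pow q * binom q i) *\<^sub>C
          Res Y (W - s) (-1 + q - int i) c (Res Y s (int i) b a))"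
      using borcherds_Res[of s "W - s" "-1" b c q a] by (simp only: expand)
    also have "\<dots> \<in> OV Y \<omega>"
    proof (intro OV_diff OV_fsum OV_scale)
      show "Res Y s (q - int i) b (Res Y (W - s) (-1 + int i) c a) \<in> OV Y \<omega>" for i
        unfolding s_def q_def by (rule Res_lowered_in_OV[OF b])
      have "-1 + q - int i = -1 - eps \<gamma> - int (Suc i)" for i by (simp add: q_def W(2))
      then show "Res Y (W - s) (-1 + q - int i) c (Res Y s (int i) b a) \<in> OV Y \<omega>" for i
        unfolding W(1) by (simp only:) (rule Res_raised_in_OV[OF c], simp)
    qed
    finally show ?thesis by (simp add: s_def q_def)
  qed
qed

lemma OV_right_ideal:
  assumes "u \<in> OV Y \<omega>"
  shows "star Y \<omega> u a \<in> OV Y \<omega>"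
  using assms is_clin_star_left subspace_OV
proof (rule OV_induct[where f = "\<lambda>u. star Y \<omega> u a"])
  fix \<beta> b c
  assume "b \<in> V \<beta>"
  then show "star Y \<omega> (Res Y \<lfloor>\<beta>\<rfloor> (-1 - eps \<beta>) b c) a \<in> OV Y \<omega>"
    by (induct c rule: homogeneous_induct)
      (auto simp: is_clinD[OF is_clin_star_left] is_clinD[OF is_clin_Res] OV_0 OV_add star_generator_right)
qed

lemma star_vac_left: "star Y \<omega> vac a = a"
proof -
  have "star Y \<omega> vac a = Res Y 0 (-1) vac a" using star_integral[of vac 0] vac_weight by simp
  also have "\<dots> = a" unfolding Res_def by (subst fsum_single[where k = 0]) (auto simp: vacuum)
  finally show ?thesis .
qed

lemma star_vac_right_mod_OV: "star Y \<omega> a vac - a \<in> OV Y \<omega>"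
proof (induct a rule: homogeneous_induct)
  case (add a a')
  then show ?case by (simp add: is_clinD[OF is_clin_star_left]) (metis OV_add add_diff_add)
next
  case (homogeneous \<alpha> a)
  then show ?case
    by (cases "\<alpha> \<in> \<int>") (simp_all add: star_homogeneous Res_vac OV_0 OV_neg nonintegral_in_OV)
qed (simp add: OV_0)

lemma star_omega_left: "star Y \<omega> \<omega> a = Y \<omega> a (-1) + 2 *\<^sub>C Y \<omega> a 0 + Y \<omega> a 1"
proof -
  have "star Y \<omega> \<omega> a = Res Y 2 (-1) \<omega> a" using star_integral[of \<omega> 2] omega_weight by simp
  also have "\<dots> = (\<Sum>j\<in>{0, 1, 2}. binom 2 j *\<^sub>C Y \<omega> a (-1 + int j))"
    unfolding Res_def by (rule fsum_eq_sum) (use binom_of_nat[of 2] in \<open>auto simp: binomial_eq_0\<close>)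
  also have "\<dots> = Y \<omega> a (-1) + 2 *\<^sub>C Y \<omega> a 0 + Y \<omega> a 1"
    using binom_of_nat[of 2 1] binom_of_nat[of 2 2] by (simp add: algebra_simps)
  finally show ?thesis .
qed

lemma L_minus_one_plus_weight_in_OV:
  assumes a: "a \<in> V (of_int k)"
  shows "Y \<omega> a 0 + of_int k *\<^sub>C a \<in> OV Y \<omega>"
proof -
  have "Res Y k (-2) a vac = (\<Sum>j\<in>{0, 1}. binom k j *\<^sub>C Y a vac (-2 + int j))"
    unfolding Res_def by (rule fsum_eq_sum) (auto simp: creation)
  also have "\<dots> = Y a vac (-2) + of_int k *\<^sub>C a" by (simp add: creation)
  also have "Y a vac (-2) = Y \<omega> a 0"
    using L_minus_one_derivative[of a vac "-1"] creation(2)[of "Y \<omega> a 0"] by simp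
  finally show ?thesis using Res_generator_in_OV[OF a, of vac] by simp
qed

lemma omega_commutator_mod_OV:
  assumes a: "a \<in> V (of_int k)"
  shows "Y \<omega> a (-1) - star Y \<omega> a \<omega> + Y \<omega> a 0 \<in> OV Y \<omega>"
proof -
  define T where "T i = binom (-1) i *\<^sub>C Res Y k (-1 + -1 - int i) (Y \<omega> a (int i)) vac" for i
  have fin: "fin_supp T"
    using truncation_seq[OF truncation_Y, of 0 \<omega> a] by (rule eventually_mono) (simp add: T_def)
  then have fin': "fin_supp (\<lambda>u. T (Suc u))" by (rule eventually_sequentially_Suc[THEN iffD2])
  have "fsum T = Y \<omega> (Res Y k (-1) a vac) (-1) - Res Y k (-1) a (Y \<omega> vac (-1))"
    unfolding T_def[abs_def] by (rule commutator_Res)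
  also have "\<dots> = Y \<omega> a (-1) - star Y \<omega> a \<omega>"
    by (simp add: Res_vac creation star_integral[OF a])
  finally have "Y \<omega> a (-1) - star Y \<omega> a \<omega> + Y \<omega> a 0
      = (T 0 + Y \<omega> a 0) + T 1 + fsum (\<lambda>u. T (Suc (Suc u)))"
    using fsum_split_first[OF fin] fsum_split_first[OF fin'] by (simp add: algebra_simps)
  also have "\<dots> \<in> OV Y \<omega>"
  proof (rule OV_add[OF OV_add])
    have La: "Y \<omega> a 0 \<in> V (of_int (k + 1))" using L_minus_one_weight[OF a] by simp
    have "Res Y (k + 1) (-2) (Y \<omega> a 0) vac = (\<Sum>u\<in>{0, 1}. binom 1 u *\<^sub>C Res Y k (-2 + int u) (Y \<omega> a 0) vac)"
      unfolding Res_add_exponent by (rule fsum_eq_sum) (use binom_of_nat[of 1] in \<open>auto simp: binomial_eq_0\<close>)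
    also have "\<dots> = T 0 + Y \<omega> a 0" by (simp add: T_def Res_vac)
    finally show "T 0 + Y \<omega> a 0 \<in> OV Y \<omega>" using Res_generator_in_OV[OF La, of vac] by simp
    have "Res Y k (-1 - 1 - int 1) a vac \<in> OV Y \<omega>" using Res_lowered_in_OV[OF a, of 1 vac] by simp
    then show "T 1 \<in> OV Y \<omega>"
      using a by (simp add: T_def Vg_def is_clinD[OF is_clin_Res_left] OV_neg OV_scale)
    show "fsum (\<lambda>u. T (Suc (Suc u))) \<in> OV Y \<omega>"
    proof (rule OV_fsum)
      fix u
      have w: "Y \<omega> a (int (Suc (Suc u))) \<in> V (of_int (k - 1 - int u))"
        using mode_weight[OF omega_weight a, of "int (Suc (Suc u))"] by (simp add: algebra_simps)
      have eq: "\<lfloor>of_int (k - 1 - int u) :: rat\<rfloor> + int (Suc u) = k"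
        "-1 - eps (of_int (k - 1 - int u) :: rat) - int (Suc (Suc u)) = -1 + -1 - int (Suc (Suc u))"
        by (simp_all only: floor_of_int) simp_all
      have "Res Y k (-1 + -1 - int (Suc (Suc u))) (Y \<omega> a (int (Suc (Suc u)))) vac \<in> OV Y \<omega>"
        using Res_raised_in_OV[OF w, of "Suc u" "Suc (Suc u)" vac, unfolded eq] by simp
      then show "T (Suc (Suc u)) \<in> OV Y \<omega>" unfolding T_def by (rule OV_scale)
    qed
  qed
  finally show ?thesis .
qed

lemma omega_central_mod_OV: "star Y \<omega> \<omega> a - star Y \<omega> a \<omega> \<in> OV Y \<omega>"
proof (induct a rule: homogeneous_induct)
  case (add a a')
  then show ?case
    by (simp add: is_clinD[OF is_clin_star_left] is_clinD[OF is_clin_star_right]) (metis OV_add add_diff_add)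
next
  case (homogeneous \<alpha> a)
  show ?case
  proof (cases "\<alpha> \<in> \<int>")
    case False
    then show ?thesis
      using homogeneous by (simp add: star_nonintegral OV_left_ideal nonintegral_in_OV)
  next
    case True
    then obtain k where k: "\<alpha> = of_int k" by (elim Ints_cases)
    have a: "a \<in> V (of_int k)" using homogeneous k by simp
    have "star Y \<omega> \<omega> a - star Y \<omega> a \<omega>
      = (Y \<omega> a (-1) - star Y \<omega> a \<omega> + Y \<omega> a 0) + (Y \<omega> a 0 + of_int k *\<^sub>C a)"
      using a by (simp add: star_omega_left Vg_def algebra_simps scaleC_add_left[of 1 1, simplified])
    also have "\<dots> \<in> OV Y \<omega>"
      by (rule OV_add[OF omega_commutator_mod_OV[OF a] L_minus_one_plus_weight_in_OV[OF a]])
    finally show ?thesis .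
  qed
qed (simp add: OV_0)

end

section \<open>Weak modules\<close>

locale qvoa_module = qvoa Y vac \<omega> cc for Y :: "'v::cvector \<Rightarrow> 'v \<Rightarrow> int \<Rightarrow> 'v" and vac \<omega> cc +
  fixes YM :: "'v \<Rightarrow> 'm::cvector \<Rightarrow> int \<Rightarrow> 'm"
  assumes weak_module: "weak_module Y vac \<omega> YM"
begin

sublocale M: borcherds Y YM
  by unfold_locales (use weak_module qVOA in \<open>simp_all add: weak_module_def qVOA_def\<close>)

lemma vacuum_M: "YM vac w n = (if n = -1 then w else 0)"
  using weak_module unfolding weak_module_def by blast

lemma OmegaD: "u \<in> Omega Y \<omega> YM \<Longrightarrow> a \<in> V \<alpha> \<Longrightarrow> \<alpha> - 1 < of_int m \<Longrightarrow> YM a u m = 0"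
  by (auto simp: Omega_def)

lemma subspace_Omega: "cvec.subspace (Omega Y \<omega> YM)"
  by (auto simp: cvec.subspace_def Omega_def is_clinD[OF M.linear_M])

lemma oop_eq_graded_ext: "oop Y \<omega> YM a u = graded_ext (\<lambda>\<alpha> x. oh YM \<alpha> x u) a"
  by (simp add: oop_def graded_ext_def hsupp_def)

lemma oop_homogeneous: "a \<in> V \<alpha> \<Longrightarrow> oop Y \<omega> YM a u = (if \<alpha> \<in> \<int> then YM a u (\<lfloor>\<alpha>\<rfloor> - 1) else 0)"
  unfolding oop_eq_graded_ext by (subst graded_ext_homogeneous) (simp_all add: oh_def)

lemma is_clin_oop_left: "is_clin (\<lambda>a. oop Y \<omega> YM a u)"
  unfolding oop_eq_graded_ext
  by (rule is_clin_graded_ext) (simp add: oh_def is_clin_def is_clinD[OF M.linear_M_left])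

lemma is_clin_oop_right: "is_clin (\<lambda>u. oop Y \<omega> YM a u)"
  unfolding oop_eq_graded_ext
  by (rule is_clin_graded_ext_param) (simp add: oh_def is_clin_def is_clinD[OF M.linear_M])

lemma oop_zero [simp]: "oop Y \<omega> YM 0 u = 0" "oop Y \<omega> YM a 0 = 0"
  using is_clin_0[OF is_clin_oop_left] is_clin_0[OF is_clin_oop_right] by blast+

lemma oop_Res_left:
  "oop Y \<omega> YM (Res Y s q b d) u = fsum (\<lambda>i. binom s i *\<^sub>C oop Y \<omega> YM (Y b d (q + int i)) u)"
  unfolding Res_def
  by (subst fsum_linear[OF is_clin_oop_left fin_supp_modes]) (simp add: is_clinD[OF is_clin_oop_left])

lemma oop_vac: "oop Y \<omega> YM vac u = u"
  by (simp add: oop_homogeneous[OF vac_weight] vacuum_M)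

lemma oop_in_Omega:
  assumes u: "u \<in> Omega Y \<omega> YM"
  shows "oop Y \<omega> YM a u \<in> Omega Y \<omega> YM"
proof (induct a rule: homogeneous_induct)
  case zero
  then show ?case by (simp add: cvec.subspace_0[OF subspace_Omega])
next
  case (add a b)
  then show ?case by (simp add: is_clinD[OF is_clin_oop_left] cvec.subspace_add[OF subspace_Omega])
next
  case (homogeneous \<alpha> x)
  show ?case
  proof (cases "\<alpha> \<in> \<int>")
    case False
    then show ?thesis using homogeneous by (simp add: oop_homogeneous cvec.subspace_0[OF subspace_Omega])
  next
    case True
    then obtain k where k: "\<alpha> = of_int k" by (elim Ints_cases)
    have "YM c (YM x u (k - 1)) m = 0" if c: "c \<in> V \<gamma>" and m: "\<gamma> - 1 < of_int m" for \<gamma> c m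
    proof -
      have "YM (Y c x (int i)) u (m + (k - 1) - int i) = 0" for i
        by (rule OmegaD[OF u mode_weight[OF c homogeneous]]) (use m k in simp)
      then show ?thesis
        using M.commutator[of c x u "k - 1" m] OmegaD[OF u c m] by simp
    qed
    then show ?thesis
      using homogeneous k by (simp add: oop_homogeneous Omega_def) blast
  qed
qed

text \<open>In the Borcherds identity for \<open>o(Res b c)\<close> every term annihilates \<open>u\<close>, because the
  modes of \<open>b\<close> and \<open>c\<close> that occur all lie above the \<open>\<Omega>\<close>-threshold.\<close>

lemma oop_generator:
  assumes b: "b \<in> V \<beta>" and c: "c \<in> V \<gamma>" and u: "u \<in> Omega Y \<omega> YM"
  shows "oop Y \<omega> YM (Res Y \<lfloor>\<beta>\<rfloor> (-1 - eps \<beta>) b c) u = 0"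
proof -
  define q where "q = -1 - eps \<beta>"
  define s where "s = \<lfloor>\<beta>\<rfloor>"
  have w: "Y b c (q + int i) \<in> V ((\<beta> + \<gamma>) + of_int (eps \<beta> - int i))" for i
    unfolding q_def by (rule generator_mode_weight[OF b c])
  have expand: "oop Y \<omega> YM (Res Y s q b c) u = fsum (\<lambda>i. binom s i *\<^sub>C oop Y \<omega> YM (Y b c (q + int i)) u)"
    by (rule oop_Res_left)
  show ?thesis
  proof (cases "\<beta> + \<gamma> \<in> \<int>")
    case False
    have "oop Y \<omega> YM (Y b c (q + int i)) u = 0" for i
      by (simp only: oop_homogeneous[OF w] add_of_int_in_Ints_iff False if_False)
    then show ?thesis using expand by (simp add: s_def q_def)
  next
    case True
    define n where "n = \<lfloor>\<beta> + \<gamma>\<rfloor> + eps \<beta> - 1 - s"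
    have n: "n = \<lfloor>\<gamma>\<rfloor>" using floor_eps_of_integral_sum(1)[OF True] by (simp add: n_def s_def)
    have "oop Y \<omega> YM (Y b c (q + int i)) u = YM (Y b c (q + int i)) u (s + n - int i)" for i
    proof -
      have "\<lfloor>\<beta> + \<gamma>\<rfloor> + (eps \<beta> - int i) - 1 = s + n - int i" by (simp add: n_def)
      then show ?thesis
        by (simp only: oop_homogeneous[OF w] floor_add_of_int add_of_int_in_Ints_iff True if_True)
    qed
    then have "oop Y \<omega> YM (Res Y s q b c) u
      = fsum (\<lambda>i. ((-1) ^ i * binom q i) *\<^sub>C YM b (YM c u (n + int i)) (s + q - int i))
      - fsum (\<lambda>i. ((-1) ^ i * minus_one_pow q * binom q i) *\<^sub>C YM c (YM b u (s + int i)) (n + q - int i))"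
      using M.borcherds_identity[of s b c q u n] by (simp only: expand)
    also have "\<dots> = 0"
    proof -
      have "YM c u (n + int i) = 0" for i by (rule OmegaD[OF u c]) (simp add: n; linarith)
      moreover have "YM b u (s + int i) = 0" for i by (rule OmegaD[OF u b]) (simp add: s_def; linarith)
      ultimately show ?thesis by simp
    qed
    finally show ?thesis by (simp add: s_def q_def)
  qed
qed

lemma oop_OV:
  assumes a: "a \<in> OV Y \<omega>" and u: "u \<in> Omega Y \<omega> YM"
  shows "oop Y \<omega> YM a u = 0"
proof -
  have "oop Y \<omega> YM a u \<in> {0}"
    using a is_clin_oop_left cvec.subspace_single_0
  proof (rule OV_induct[where f = "\<lambda>a. oop Y \<omega> YM a u"])
    fix \<beta> b c
    assume "b \<in> V \<beta>"
    then show "oop Y \<omega> YM (Res Y \<lfloor>\<beta>\<rfloor> (-1 - eps \<beta>) b c) u \<in> {0}"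
      by (induct c rule: homogeneous_induct)
        (simp_all add: is_clinD[OF is_clin_oop_left] is_clinD[OF is_clin_Res] oop_generator[OF _ _ u])
  qed
  then show ?thesis by simp
qed

lemma oop_star_homogeneous:
  assumes a: "a \<in> V \<alpha>" and b: "b \<in> V \<beta>" and u: "u \<in> Omega Y \<omega> YM"
  shows "oop Y \<omega> YM (star Y \<omega> a b) u = oop Y \<omega> YM a (oop Y \<omega> YM b u)"
proof (cases "\<alpha> \<in> \<int>")
  case False
  then show ?thesis using a by (simp add: star_nonintegral oop_homogeneous)
next
  case True
  then obtain k where k: "\<alpha> = of_int k" by (elim Ints_cases)
  have a': "a \<in> V (of_int k)" using a k by simp
  have expand: "oop Y \<omega> YM (star Y \<omega> a b) u = fsum (\<lambda>i. binom k i *\<^sub>C oop Y \<omega> YM (Y a b (-1 + int i)) u)"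
    by (simp add: star_integral[OF a'] oop_Res_left)
  show ?thesis
  proof (cases "\<beta> \<in> \<int>")
    case False
    have "oop Y \<omega> YM (Y a b (-1 + int i)) u = 0" for i
      by (simp only: oop_homogeneous[OF mode_weight_integral[OF a' b]] add_of_int_in_Ints_iff False if_False)
    then show ?thesis using False b unfolding expand by (simp add: oop_homogeneous)
  next
    case True
    then obtain s where s: "\<beta> = of_int s" by (elim Ints_cases)
    have "oop Y \<omega> YM (Y a b (-1 + int i)) u = YM (Y a b (-1 + int i)) u (k + (s - 1) - int i)" for i
    proof -
      have "\<lfloor>\<beta>\<rfloor> + (k - int i) - 1 = k + (s - 1) - int i" by (simp add: s)
      then show ?thesis
        by (simp only: oop_homogeneous[OF mode_weight_integral[OF a' b]] floor_add_of_int
            add_of_int_in_Ints_iff True if_True)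
    qed
    then have "oop Y \<omega> YM (star Y \<omega> a b) u
      = fsum (\<lambda>i. ((-1) ^ i * binom (-1) i) *\<^sub>C YM a (YM b u (s - 1 + int i)) (k + -1 - int i))
      - fsum (\<lambda>i. ((-1) ^ i * minus_one_pow (-1) * binom (-1) i) *\<^sub>C YM b (YM a u (k + int i)) (s - 1 + -1 - int i))"
      using M.borcherds_identity[of k a b "-1" u "s - 1"] by (simp only: expand)
    also have "\<dots> = YM a (YM b u (s - 1)) (k - 1)"
    proof -
      have "YM a u (k + int i) = 0" for i by (rule OmegaD[OF u a']) simp
      moreover have "YM b u (s - 1 + int i) = 0" if "i \<noteq> 0" for i
        by (rule OmegaD[OF u b]) (use that s in simp)
      ultimately show ?thesis by (simp add: fsum_single[where k = 0])
    qed
    also have "\<dots> = oop Y \<omega> YM a (oop Y \<omega> YM b u)"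
      using a' b s by (simp add: oop_homogeneous)
    finally show ?thesis .
  qed
qed

lemma oop_star:
  assumes u: "u \<in> Omega Y \<omega> YM"
  shows "oop Y \<omega> YM (star Y \<omega> a b) u = oop Y \<omega> YM a (oop Y \<omega> YM b u)"
proof (induct a rule: homogeneous_induct)
  case (add a a')
  then show ?case by (simp add: is_clinD[OF is_clin_star_left] is_clinD[OF is_clin_oop_left])
next
  case (homogeneous \<alpha> a)
  show ?case
  proof (induct b rule: homogeneous_induct)
    case (add b b')
    then show ?case
      by (simp add: is_clinD[OF is_clin_star_right] is_clinD[OF is_clin_oop_left] is_clinD[OF is_clin_oop_right])
  qed (simp_all add: oop_star_homogeneous[OF homogeneous _ u])
qed simp

end

theorem theorem3p2:
  fixes Y :: "'v::cvector \<Rightarrow> 'v \<Rightarrow> int \<Rightarrow> 'v" and vac \<omega> :: 'v and cc :: complex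
  assumes "qVOA Y vac \<omega> cc"
  shows
    \<comment> \<open>(a) * is bilinear, O(V) is a two-sided ideal, A(V) associative with identity, omega central\<close>
    "(\<forall>b. is_clin (\<lambda>a. star Y \<omega> a b)) \<and> (\<forall>a. is_clin (\<lambda>b. star Y \<omega> a b))
   \<and> (\<forall>u\<in>OV Y \<omega>. \<forall>a. star Y \<omega> a u \<in> OV Y \<omega> \<and> star Y \<omega> u a \<in> OV Y \<omega>)
   \<and> (\<forall>a b c. star Y \<omega> (star Y \<omega> a b) c - star Y \<omega> a (star Y \<omega> b c) \<in> OV Y \<omega>)
   \<and> (\<forall>a. star Y \<omega> vac a - a \<in> OV Y \<omega> \<and> star Y \<omega> a vac - a \<in> OV Y \<omega>)
   \<and> (\<forall>a. star Y \<omega> \<omega> a - star Y \<omega> a \<omega> \<in> OV Y \<omega>)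
   \<and> \<comment> \<open>(b) Omega(M) is an A(V)-module with a + O(V) acting as o(a)\<close>
     (\<forall>YM :: 'v \<Rightarrow> 'm::cvector \<Rightarrow> int \<Rightarrow> 'm. weak_module Y vac \<omega> YM \<longrightarrow>
        0 \<in> Omega Y \<omega> YM
      \<and> (\<forall>u\<in>Omega Y \<omega> YM. \<forall>v\<in>Omega Y \<omega> YM. u + v \<in> Omega Y \<omega> YM)
      \<and> (\<forall>c. \<forall>u\<in>Omega Y \<omega> YM. c *\<^sub>C u \<in> Omega Y \<omega> YM)
      \<and> (\<forall>u. is_clin (\<lambda>a. oop Y \<omega> YM a u))
      \<and> (\<forall>a. \<forall>u\<in>Omega Y \<omega> YM. oop Y \<omega> YM a u \<in> Omega Y \<omega> YM)
      \<and> (\<forall>a\<in>OV Y \<omega>. \<forall>u\<in>Omega Y \<omega> YM. oop Y \<omega> YM a u = 0)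
      \<and> (\<forall>a b. \<forall>u\<in>Omega Y \<omega> YM. oop Y \<omega> YM (star Y \<omega> a b) u = oop Y \<omega> YM a (oop Y \<omega> YM b u))
      \<and> (\<forall>u\<in>Omega Y \<omega> YM. oop Y \<omega> YM vac u = u))"
proof -
  interpret qvoa Y vac \<omega> cc by unfold_locales (rule assms)
  show ?thesis
  proof (intro conjI allI ballI impI)
    show "is_clin (\<lambda>a. star Y \<omega> a b)" for b by (rule is_clin_star_left)
    show "is_clin (\<lambda>b. star Y \<omega> a b)" for a by (rule is_clin_star_right)
    show "star Y \<omega> a u \<in> OV Y \<omega>" if "u \<in> OV Y \<omega>" for u a using that by (rule OV_left_ideal)
    show "star Y \<omega> u a \<in> OV Y \<omega>" if "u \<in> OV Y \<omega>" for u a using that by (rule OV_right_ideal)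
    show "star Y \<omega> (star Y \<omega> a b) c - star Y \<omega> a (star Y \<omega> b c) \<in> OV Y \<omega>" for a b c
      by (rule star_assoc_mod_OV)
    show "star Y \<omega> vac a - a \<in> OV Y \<omega>" for a by (simp add: star_vac_left OV_0)
    show "star Y \<omega> a vac - a \<in> OV Y \<omega>" for a by (rule star_vac_right_mod_OV)
    show "star Y \<omega> \<omega> a - star Y \<omega> a \<omega> \<in> OV Y \<omega>" for a by (rule omega_central_mod_OV)
  next
    fix YM :: "'v \<Rightarrow> 'm::cvector \<Rightarrow> int \<Rightarrow> 'm"
    assume "weak_module Y vac \<omega> YM"
    then interpret qvoa_module Y vac \<omega> cc YM by unfold_locales
    show "0 \<in> Omega Y \<omega> YM" by (rule cvec.subspace_0[OF subspace_Omega])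
    show "u + v \<in> Omega Y \<omega> YM" if "u \<in> Omega Y \<omega> YM" "v \<in> Omega Y \<omega> YM" for u v
      using that by (rule cvec.subspace_add[OF subspace_Omega])
    show "c *\<^sub>C u \<in> Omega Y \<omega> YM" if "u \<in> Omega Y \<omega> YM" for c u
      using that by (rule cvec.subspace_scale[OF subspace_Omega])
    show "is_clin (\<lambda>a. oop Y \<omega> YM a u)" for u by (rule is_clin_oop_left)
    show "oop Y \<omega> YM a u \<in> Omega Y \<omega> YM" if "u \<in> Omega Y \<omega> YM" for a u
      using that by (rule oop_in_Omega)
    show "oop Y \<omega> YM a u = 0" if "a \<in> OV Y \<omega>" "u \<in> Omega Y \<omega> YM" for a u
      using that by (rule oop_OV)
    show "oop Y \<omega> YM (star Y \<omega> a b) u = oop Y \<omega> YM a (oop Y \<omega> YM b u)" if "u \<in> Omega Y \<omega> YM" for a b u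
      using that by (rule oop_star)
    show "oop Y \<omega> YM vac u = u" for u by (rule oop_vac)
  qed
qed

end
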